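(* Let $\mathcal{A}$ be a commutative unital complex Banach algebra. An element $a=(a_n)_{n\in\mathbb N}\in\ell^1(\mathbb{N},\mathcal{A})$ is invertible in $\ell^1(\mathbb{N},\mathcal{A})$ if and only if $\widehat{a}(\chi)=\sum_{n\in\mathbb{N}} a_n\chi(n)$ is invertible in $\mathcal{A}$ for every $\chi\in\widehat{\mathbb{N}}$.
   Context: $\ell^1(\mathbb N,\mathcal A)$ is the set of sequences $(a_n)_{n\in\mathbb N}$ in $\mathcal A$ with $\sum_n\|a_n\|<\infty$, a unital Banach algebra under the Dirichlet convolution $(a\star b)_n=\sum_{k,l\in\mathbb N,\,kl=n}a_kb_l$. Regarding $\mathbb N$ as a semigroup under multiplication, a semicharacter is a nonzero bounded map $\chi:\mathbb N\to\mathbb C$ with $\chi(mn)=\chi(m)\chi(n)$ for all $m,n\in\mathbb N$; $\widehat{\mathbb N}$ denotes the set of all semicharacters. *)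

theory Defs
  imports "HOL-Analysis.Analysis"
begin

text \<open>Complex normed unital algebras: a real normed unital algebra equipped with a
  compatible complex scalar multiplication (the library has no complex vector space class).\<close>
class complex_normed_algebra_1 = real_normed_algebra_1 +
  fixes scaleC :: "complex \<Rightarrow> 'a \<Rightarrow> 'a"
  assumes scaleC_add_right: "scaleC c (x + y) = scaleC c x + scaleC c y"
    and scaleC_add_left: "scaleC (c + d) x = scaleC c x + scaleC d x"
    and scaleC_scaleC: "scaleC c (scaleC d x) = scaleC (c * d) x"
    and scaleC_one: "scaleC 1 x = x"
    and scaleC_of_real: "scaleC (complex_of_real r) x = scaleR r x"
    and norm_scaleC: "norm (scaleC c x) = cmod c * norm x"
    and mult_scaleC_left: "scaleC c x * y = scaleC c (x * y)"
    and mult_scaleC_right: "x * scaleC c y = scaleC c (x * y)"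

text \<open>The index set \<open>\<nat> = {1,2,...}\<close> is rendered as \<open>{1..} :: nat set\<close>; elements of
  \<open>\<ell>\<^sup>1(\<nat>,A)\<close> are functions \<open>nat \<Rightarrow> 'a\<close> vanishing at the dummy index 0.\<close>
definition l1 :: "(nat \<Rightarrow> 'a::real_normed_vector) set" where
  "l1 = {a. a 0 = 0 \<and> (\<lambda>n. norm (a n)) summable_on {1..}}"

definition dconv :: "(nat \<Rightarrow> 'a::comm_ring_1) \<Rightarrow> (nat \<Rightarrow> 'a) \<Rightarrow> nat \<Rightarrow> 'a" where
  "dconv a b n = (if n = 0 then 0 else (\<Sum>(k,l)\<in>{(k,l). k * l = n}. a k * b l))"

definition dunit :: "nat \<Rightarrow> 'a::comm_ring_1" where
  "dunit n = (if n = 1 then 1 else 0)"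

definition l1_invertible :: "(nat \<Rightarrow> 'a::{real_normed_vector,comm_ring_1}) \<Rightarrow> bool" where
  "l1_invertible a \<longleftrightarrow> (\<exists>b\<in>l1. dconv a b = dunit \<and> dconv b a = dunit)"

text \<open>Semicharacters of the multiplicative semigroup \<open>\<nat> = {1,2,...}\<close> (values at 0 are irrelevant).\<close>
definition semicharacter :: "(nat \<Rightarrow> complex) \<Rightarrow> bool" where
  "semicharacter chi \<longleftrightarrow> (\<exists>n\<ge>1. chi n \<noteq> 0) \<and> (\<exists>B. \<forall>n\<ge>1. cmod (chi n) \<le> B)
     \<and> (\<forall>m n. m \<ge> 1 \<longrightarrow> n \<ge> 1 \<longrightarrow> chi (m * n) = chi m * chi n)"

definition gtrans :: "(nat \<Rightarrow> 'a::{complex_normed_algebra_1,banach}) \<Rightarrow> (nat \<Rightarrow> complex) \<Rightarrow> 'a" where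
  "gtrans a chi = infsum (\<lambda>n. scaleC (chi n) (a n)) {1..}"

end

(*
  If a is invertible, then so is \<hat>a(\<chi>) for every semicharacter \<chi>: since \<chi> is multiplicative,
  a \<mapsto> \<hat>a(\<chi>) turns Dirichlet convolution into the Cauchy product of two absolutely
  convergent series.

  Conversely, \<ell>\<^sup>1(\<nat>, A) is itself a commutative unital complex Banach algebra.  If a is not
  invertible there, it lies in a maximal ideal, and by the Gelfand-Mazur theorem the quotient
  map is a character \<Phi> with \<Phi>(a) = 0.  Such a \<Phi> is determined by the semicharacter
  \<chi>(n) = \<Phi>(\<delta>\<^sub>n) and the character \<phi>(x) = \<Phi>(x \<delta>\<^sub>1) of A, and continuity gives
  \<Phi>(a) = \<phi>(\<hat>a(\<chi>)); hence \<hat>a(\<chi>) is not invertible.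
*)

theory Submission
  imports Defs
begin

definition of_complex :: "complex \<Rightarrow> 'a::complex_normed_algebra_1" where
  "of_complex c = scaleC c 1"

lemma scaleC_conv_of_complex: "scaleC c x = of_complex c * x"
  by (simp add: of_complex_def mult_scaleC_left)

lemma scaleC_zero_right [simp]: "scaleC c 0 = 0"
  by (simp add: scaleC_conv_of_complex)

lemma of_complex_of_real: "of_complex (complex_of_real r) = of_real r"
  unfolding of_complex_def scaleC_of_real by (simp add: of_real_def)

lemma of_complex_0 [simp]: "of_complex 0 = 0"
  using of_complex_of_real[of 0] by simp

lemma of_complex_1 [simp]: "of_complex 1 = 1"
  by (simp add: of_complex_def scaleC_one)

lemma of_complex_of_nat [simp]: "of_complex (of_nat n) = of_nat n"
  using of_complex_of_real[of "real n"] by simp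

lemma of_complex_add: "of_complex (c + d) = of_complex c + of_complex d"
  by (simp add: of_complex_def scaleC_add_left)

lemma of_complex_mult: "of_complex (c * d) = of_complex c * of_complex d"
  by (metis of_complex_def scaleC_conv_of_complex scaleC_scaleC)

lemma of_complex_minus: "of_complex (- c) = - of_complex c"
  using of_complex_add[of c "- c"] by (simp add: eq_neg_iff_add_eq_0 add.commute)

lemma of_complex_diff: "of_complex (c - d) = of_complex c - of_complex d"
  using of_complex_add[of c "- d"] by (simp add: of_complex_minus)

lemma of_complex_power: "of_complex (c ^ n) = of_complex c ^ n"
  by (induction n) (simp_all add: of_complex_mult)

lemma of_complex_sum: "of_complex (\<Sum>i\<in>A. f i) = (\<Sum>i\<in>A. of_complex (f i))"
  by (induction A rule: infinite_finite_induct) (simp_all add: of_complex_add)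

lemma norm_of_complex [simp]: "norm (of_complex c :: 'a::complex_normed_algebra_1) = cmod c"
  by (simp add: of_complex_def norm_scaleC)

lemma invertible_if_norm_one_diff_less_one:
  fixes z :: "'a::{real_normed_algebra_1,banach}"
  assumes "norm (1 - z) < 1"
  shows "\<exists>w. z * w = 1 \<and> w * z = 1"
proof -
  define u where "u = 1 - z"
  have z: "z = 1 - u"
    by (simp add: u_def)
  have "summable (\<lambda>n. norm u ^ n)"
    using assms by (simp add: u_def summable_geometric)
  then have "summable (\<lambda>n. u ^ n)"
    by (rule summable_comparison_test[rotated]) (auto intro: norm_power_ineq)
  then obtain w where w: "(\<lambda>n. u ^ n) sums w"
    by (auto simp: summable_def)
  have telescope: "(\<lambda>n. u ^ n - u ^ Suc n) sums 1"
    using telescope_sums'[OF summable_LIMSEQ_zero[OF sums_summable[OF w]]] by simp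
  have "z * u ^ n = u ^ n - u ^ Suc n" for n
    by (simp add: z algebra_simps)
  then have "(\<lambda>n. u ^ n - u ^ Suc n) sums (z * w)"
    using sums_mult[OF w, of z] by simp
  then have "z * w = 1"
    using telescope by (rule sums_unique2)
  have "u ^ n * z = u ^ n - u ^ Suc n" for n
    by (simp add: z algebra_simps power_commutes)
  then have "(\<lambda>n. u ^ n - u ^ Suc n) sums (w * z)"
    using sums_mult2[OF w, of z] by simp
  then have "w * z = 1"
    using telescope by (rule sums_unique2)
  with \<open>z * w = 1\<close> show ?thesis
    by blast
qed

section \<open>Ideals and characters\<close>

definition ideal :: "'a::comm_ring_1 set \<Rightarrow> bool" where
  "ideal I \<longleftrightarrow> 0 \<in> I \<and> (\<forall>x\<in>I. \<forall>y\<in>I. x + y \<in> I) \<and> (\<forall>x\<in>I. \<forall>y. y * x \<in> I)"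

lemma ideal_0: "ideal I \<Longrightarrow> 0 \<in> I"
  by (simp add: ideal_def)

lemma ideal_add: "ideal I \<Longrightarrow> x \<in> I \<Longrightarrow> y \<in> I \<Longrightarrow> x + y \<in> I"
  by (simp add: ideal_def)

lemma ideal_mult_left: "ideal I \<Longrightarrow> x \<in> I \<Longrightarrow> y * x \<in> I"
  by (simp add: ideal_def)

lemma ideal_mult_right: "ideal I \<Longrightarrow> x \<in> I \<Longrightarrow> x * y \<in> I"
  by (metis ideal_mult_left mult.commute)

lemma ideal_uminus: "ideal I \<Longrightarrow> x \<in> I \<Longrightarrow> - x \<in> I"
  using ideal_mult_left[of I x "- 1"] by simp

lemma ideal_diff: "ideal I \<Longrightarrow> x \<in> I \<Longrightarrow> y \<in> I \<Longrightarrow> x - y \<in> I"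
  by (metis ideal_add ideal_uminus diff_conv_add_uminus)

lemma ideal_sum: "ideal I \<Longrightarrow> (\<And>i. i \<in> A \<Longrightarrow> f i \<in> I) \<Longrightarrow> (\<Sum>i\<in>A. f i) \<in> I"
  by (induction A rule: infinite_finite_induct) (auto simp: ideal_0 ideal_add)

lemma ideal_add_principal:
  assumes "ideal I"
  shows "ideal {m + z * y |m y. m \<in> I}"
  unfolding ideal_def
proof (intro conjI ballI allI)
  have "0 = 0 + z * 0"
    by simp
  then show "0 \<in> {m + z * y |m y. m \<in> I}"
    using ideal_0[OF assms] by blast
next
  fix a b assume "a \<in> {m + z * y |m y. m \<in> I}" "b \<in> {m + z * y |m y. m \<in> I}"
  then obtain m y m' y' where "a = m + z * y" "b = m' + z * y'" "m \<in> I" "m' \<in> I"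
    by blast
  moreover have "a + b = (m + m') + z * (y + y')" if "a = m + z * y" "b = m' + z * y'"
    using that by (simp add: algebra_simps)
  ultimately show "a + b \<in> {m + z * y |m y. m \<in> I}"
    using ideal_add[OF assms] by blast
next
  fix a t assume "a \<in> {m + z * y |m y. m \<in> I}"
  then obtain m y where "a = m + z * y" "m \<in> I"
    by blast
  moreover have "t * a = t * m + z * (t * y)" if "a = m + z * y"
    using that by (simp add: algebra_simps)
  ultimately show "t * a \<in> {m + z * y |m y. m \<in> I}"
    using ideal_mult_left[OF assms] by blast
qed

lemma ideal_principal: "ideal (range (\<lambda>y. z * y))"
proof -
  have "ideal {m + z * y |m y. m \<in> {0}}"
    by (rule ideal_add_principal) (simp add: ideal_def)
  also have "{m + z * y |m y. m \<in> {0}} = range (\<lambda>y. z * y)"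
    by auto
  finally show ?thesis .
qed

locale maximal_ideal =
  fixes M :: "'a::comm_ring_1 set"
  assumes ideal: "ideal M"
    and one_not_mem: "1 \<notin> M"
    and maximal: "\<And>J. ideal J \<Longrightarrow> M \<subseteq> J \<Longrightarrow> 1 \<notin> J \<Longrightarrow> J = M"
begin

lemma inverse_mod_exists:
  assumes "z \<notin> M"
  shows "\<exists>y. z * y - 1 \<in> M"
proof -
  define J where "J = {m + z * y |m y. m \<in> M}"
  have "m = m + z * 0" "z = 0 + z * 1" for m
    by simp_all
  then have "M \<subseteq> J" "z \<in> J"
    unfolding J_def using ideal_0[OF ideal] by blast+
  then have "1 \<in> J"
    using assms maximal[of J] ideal_add_principal[OF ideal] unfolding J_def by blast
  then obtain m y where "1 = m + z * y" "m \<in> M"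
    unfolding J_def by blast
  then have "z * y - 1 = - m" "m \<in> M"
    by (simp_all add: algebra_simps)
  then show ?thesis
    using ideal_uminus[OF ideal] by metis
qed

end

lemma ideal_Union_chain:
  assumes "\<C> \<noteq> {}" "\<And>J. J \<in> \<C> \<Longrightarrow> ideal J" "\<And>J K. J \<in> \<C> \<Longrightarrow> K \<in> \<C> \<Longrightarrow> J \<subseteq> K \<or> K \<subseteq> J"
  shows "ideal (\<Union>\<C>)"
  unfolding ideal_def
proof (intro conjI ballI allI)
  show "0 \<in> \<Union>\<C>"
    using assms(1,2) ideal_0 by blast
next
  fix x y assume "x \<in> \<Union>\<C>" "y \<in> \<Union>\<C>"
  then obtain J K where JK: "J \<in> \<C>" "K \<in> \<C>" "x \<in> J" "y \<in> K"
    by blast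
  then consider "J \<subseteq> K" | "K \<subseteq> J"
    using assms(3) by blast
  then show "x + y \<in> \<Union>\<C>"
    using JK assms(2) ideal_add by cases blast+
next
  fix x y assume "x \<in> \<Union>\<C>"
  then show "y * x \<in> \<Union>\<C>"
    using assms(2) ideal_mult_left by blast
qed

lemma exists_maximal_ideal:
  fixes I :: "'a::comm_ring_1 set"
  assumes "ideal I" "1 \<notin> I"
  shows "\<exists>M. maximal_ideal M \<and> I \<subseteq> M"
proof -
  define \<A> where "\<A> = {J. ideal J \<and> 1 \<notin> J \<and> I \<subseteq> J}"
  have "\<Union>\<C> \<in> \<A>" if "\<C> \<noteq> {}" "subset.chain \<A> \<C>" for \<C>
  proof -
    have \<C>: "\<And>J. J \<in> \<C> \<Longrightarrow> ideal J \<and> 1 \<notin> J \<and> I \<subseteq> J"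
      "\<And>J K. J \<in> \<C> \<Longrightarrow> K \<in> \<C> \<Longrightarrow> J \<subseteq> K \<or> K \<subseteq> J"
      using that(2) by (auto simp: \<A>_def subset.chain_def)
    then have "ideal (\<Union>\<C>)"
      using that(1) by (intro ideal_Union_chain) auto
    moreover have "1 \<notin> \<Union>\<C>" "I \<subseteq> \<Union>\<C>"
      using that(1) \<C>(1) by blast+
    ultimately show ?thesis
      by (simp add: \<A>_def)
  qed
  moreover have "\<A> \<noteq> {}"
    using assms by (auto simp: \<A>_def)
  ultimately obtain M where "M \<in> \<A>" "\<And>J. J \<in> \<A> \<Longrightarrow> M \<subseteq> J \<Longrightarrow> J = M"
    using subset_Zorn_nonempty[of \<A>] by blast
  then have "maximal_ideal M"
    by unfold_locales (auto simp: \<A>_def)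
  then show ?thesis
    using \<open>M \<in> \<A>\<close> by (auto simp: \<A>_def)
qed

locale character =
  fixes \<phi> :: "'a::complex_normed_algebra_1 \<Rightarrow> complex"
  assumes hom_add: "\<phi> (x + y) = \<phi> x + \<phi> y"
    and hom_scaleC: "\<phi> (scaleC c x) = c * \<phi> x"
    and hom_mult: "\<phi> (x * y) = \<phi> x * \<phi> y"
    and hom_one: "\<phi> 1 = 1"
begin

lemma hom_diff: "\<phi> (x - y) = \<phi> x - \<phi> y"
  using hom_add[of "x - y" y] by simp

lemma hom_unit_nonzero: "x * y = 1 \<Longrightarrow> \<phi> x \<noteq> 0"
  using hom_mult[of x y] hom_one by auto

end

lemma character_norm_le:
  fixes \<phi> :: "'a::{complex_normed_algebra_1,banach} \<Rightarrow> complex"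
  assumes "character \<phi>"
  shows "cmod (\<phi> z) \<le> norm z"
proof (rule ccontr)
  interpret character \<phi> by fact
  assume "\<not> cmod (\<phi> z) \<le> norm z"
  then have less: "norm z < cmod (\<phi> z)" and nz: "\<phi> z \<noteq> 0"
    by auto
  have "norm (1 - (1 - scaleC (inverse (\<phi> z)) z)) = norm z / cmod (\<phi> z)"
    by (simp add: norm_scaleC norm_inverse divide_inverse_commute)
  also have "\<dots> < 1"
    using less by (simp add: divide_less_eq_1)
  finally have "norm (1 - (1 - scaleC (inverse (\<phi> z)) z)) < 1" .
  then obtain w where "(1 - scaleC (inverse (\<phi> z)) z) * w = 1"
    using invertible_if_norm_one_diff_less_one by blast
  moreover have "\<phi> (1 - scaleC (inverse (\<phi> z)) z) = 0"
    using nz by (simp add: hom_diff hom_one hom_scaleC)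
  ultimately show False
    using hom_unit_nonzero by blast
qed

lemma bounded_linear_character:
  fixes \<phi> :: "'a::{complex_normed_algebra_1,banach} \<Rightarrow> complex"
  assumes "character \<phi>"
  shows "bounded_linear \<phi>"
proof (rule bounded_linear_intro[where K = 1])
  interpret character \<phi> by fact
  show "\<phi> (x + y) = \<phi> x + \<phi> y" for x y
    by (rule hom_add)
  show "\<phi> (r *\<^sub>R x) = r *\<^sub>R \<phi> x" for r x
    using hom_scaleC[of "complex_of_real r" x] by (simp add: scaleC_of_real scaleR_conv_of_real)
  show "norm (\<phi> x) \<le> norm x * 1" for x
    using character_norm_le[OF assms] by simp
qed

section \<open>The Gelfand-Mazur theorem modulo a maximal ideal\<close>

lemma sum_powers_root_of_unity:
  assumes "0 < n" "j < n"
  shows "(\<Sum>k<n. (cis (2 * pi / n) ^ k) ^ j) = (if j = 0 then of_nat n else 0)"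
proof (cases "j = 0")
  case False
  define w where "w = cis (2 * pi / n) ^ j"
  have w_eq: "w = cis (2 * pi * real j / real n)"
    unfolding w_def Complex.DeMoivre by (simp add: field_simps)
  have "w \<noteq> 1"
  proof
    assume "w = 1"
    then have eq: "cis (2 * pi * real j / real n) = cis (2 * pi * real 0 / real n)"
      using w_eq by simp
    have inj: "inj_on (\<lambda>k. cis (2 * pi * real k / real n)) {..<n}"
      using Complex.bij_betw_roots_unity[OF \<open>0 < n\<close>] by (simp add: bij_betw_def)
    have "j = 0"
      using inj_onD[OF inj, of j 0] eq assms by simp
    with False show False ..
  qed
  have "w ^ n = cis (2 * pi / n) ^ (n * j)"
    unfolding w_def by (simp add: power_mult[symmetric] mult.commute)
  also have "\<dots> = 1"
    using \<open>0 < n\<close> by (simp add: power_mult Complex.DeMoivre)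
  finally have "w ^ n = 1" .
  have "(\<Sum>k<n. (cis (2 * pi / n) ^ k) ^ j) = (\<Sum>k<n. w ^ k)"
    unfolding w_def by (simp add: power_mult[symmetric] mult.commute)
  also have "\<dots> = 0"
    using \<open>w \<noteq> 1\<close> \<open>w ^ n = 1\<close> by (simp add: geometric_sum)
  finally show ?thesis
    using False by simp
qed simp

lemma sum_powers_scaled_root_of_unity:
  assumes "0 < n" "j < n"
  shows "(\<Sum>k<n. (cis (2 * pi / n) ^ k * d) ^ j) = (if j = 0 then of_nat n else 0)"
proof -
  have "(\<Sum>k<n. (cis (2 * pi / n) ^ k * d) ^ j) = (\<Sum>k<n. (cis (2 * pi / n) ^ k) ^ j) * d ^ j"
    by (simp add: power_mult_distrib sum_distrib_right)
  then show ?thesis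
    using sum_powers_root_of_unity[OF assms] by simp
qed

lemma root_of_unity_power_n:
  assumes "0 < n"
  shows "(cis (2 * pi / n) ^ k) ^ n = 1"
proof -
  have "cis (2 * pi / n) ^ n = 1"
    using assms by (simp add: Complex.DeMoivre)
  then show ?thesis
    by (metis mult.commute power_mult power_one)
qed

locale banach_maximal_ideal = maximal_ideal M
  for M :: "'a::{complex_normed_algebra_1,banach,comm_ring_1} set"
begin

text \<open>The distance to \<open>M\<close> is the quotient norm \<open>\<parallel>z + M\<parallel>\<close> of the normed field \<open>A/M\<close>;
  we work with it directly instead of forming the quotient algebra.\<close>
abbreviation qnorm :: "'a \<Rightarrow> real" where
  "qnorm z \<equiv> infdist z M"

lemma qnorm_le: "m \<in> M \<Longrightarrow> qnorm z \<le> norm (z - m)"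
  by (metis infdist_le dist_norm)

lemma qnorm_le_norm: "qnorm z \<le> norm z"
  using qnorm_le[OF ideal_0[OF ideal]] by simp

lemma qnorm_scaled_greatest:
  assumes "0 < k" "\<And>m. m \<in> M \<Longrightarrow> c \<le> k * norm (z - m)"
  shows "c \<le> k * qnorm z"
proof -
  have "M \<noteq> {}"
    using ideal_0[OF ideal] by blast
  then have "c / k \<le> qnorm z"
    unfolding infdist_notempty[OF \<open>M \<noteq> {}\<close>]
    using assms by (intro cINF_greatest) (auto simp: dist_norm divide_le_eq mult.commute)
  then show ?thesis
    using assms(1) by (simp add: divide_le_eq mult.commute)
qed

lemma qnorm_add: "qnorm (z + w) \<le> qnorm z + qnorm w"
proof -
  have "qnorm (z + w) \<le> norm (z - m) + norm (w - m')" if "m \<in> M" "m' \<in> M" for m m'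
  proof -
    have "qnorm (z + w) \<le> norm (z + w - (m + m'))"
      using that by (simp add: qnorm_le ideal ideal_add)
    also have "\<dots> \<le> norm (z - m) + norm (w - m')"
      by (metis add_diff_add norm_triangle_ineq)
    finally show ?thesis .
  qed
  then have "qnorm (z + w) - norm (w - m') \<le> 1 * qnorm z" if "m' \<in> M" for m'
    using that by (intro qnorm_scaled_greatest) (auto simp: algebra_simps)
  then have "qnorm (z + w) - qnorm z \<le> 1 * qnorm w"
    by (intro qnorm_scaled_greatest) (auto simp: algebra_simps)
  then show ?thesis
    by simp
qed

lemma qnorm_cong: "z - w \<in> M \<Longrightarrow> qnorm z = qnorm w"
  using qnorm_add[of w "z - w"] qnorm_add[of z "w - z"] ideal_uminus[OF ideal, of "z - w"]
  by simp

lemma qnorm_mult_le_norm: "qnorm (x * w) \<le> norm x * qnorm w"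
proof (cases "x = 0")
  case False
  show ?thesis
  proof (rule qnorm_scaled_greatest)
    fix m assume "m \<in> M"
    then have "qnorm (x * w) \<le> norm (x * w - x * m)"
      by (simp add: qnorm_le ideal ideal_mult_left)
    also have "\<dots> \<le> norm x * norm (w - m)"
      by (metis norm_mult_ineq right_diff_distrib)
    finally show "qnorm (x * w) \<le> norm x * norm (w - m)" .
  qed (use False in simp)
qed (simp add: ideal ideal_0)

lemma qnorm_mult: "qnorm (z * w) \<le> qnorm z * qnorm w"
proof (cases "qnorm w = 0")
  case True
  then show ?thesis
    using qnorm_mult_le_norm[of z w] by simp
next
  case False
  have "qnorm (z * w) \<le> qnorm w * norm (z - m)" if "m \<in> M" for m
  proof -
    have "qnorm (z * w) = qnorm ((z - m) * w)"
      using that by (intro qnorm_cong) (simp add: algebra_simps ideal ideal_mult_right)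
    also have "\<dots> \<le> norm (z - m) * qnorm w"
      by (rule qnorm_mult_le_norm)
    finally show ?thesis
      by (simp add: mult.commute)
  qed
  then have "qnorm (z * w) \<le> qnorm w * qnorm z"
    using False infdist_nonneg[of w M] by (intro qnorm_scaled_greatest) auto
  then show ?thesis
    by (simp add: mult.commute)
qed

lemma qnorm_scaleC: "qnorm (scaleC c z) = cmod c * qnorm z"
proof -
  have le: "qnorm (scaleC c z) \<le> cmod c * qnorm z" for c z
    using qnorm_mult_le_norm[of "of_complex c" z] by (simp add: scaleC_conv_of_complex)
  show ?thesis
  proof (cases "c = 0")
    case False
    have "qnorm z \<le> cmod (inverse c) * qnorm (scaleC c z)"
      using le[of "inverse c" "scaleC c z"] False by (simp add: scaleC_scaleC scaleC_one)
    then have "cmod c * qnorm z \<le> cmod c * (inverse (cmod c) * qnorm (scaleC c z))"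
      by (simp add: mult_left_mono norm_inverse)
    also have "\<dots> = qnorm (scaleC c z)"
      using False by simp
    finally have "cmod c * qnorm z \<le> qnorm (scaleC c z)" .
    with le show ?thesis
      by (simp add: order_antisym)
  qed (simp add: scaleC_conv_of_complex ideal ideal_0)
qed

lemma qnorm_diff: "qnorm (z - w) \<le> qnorm z + qnorm w"
  using qnorm_add[of z "- w"] qnorm_scaleC[of "- 1" w]
  by (simp add: scaleC_conv_of_complex of_complex_minus)

lemma qnorm_sum: "qnorm (\<Sum>i\<in>A. f i) \<le> (\<Sum>i\<in>A. qnorm (f i))"
  by (induction A rule: infinite_finite_induct)
    (auto simp: ideal ideal_0 intro: order.trans[OF qnorm_add])

lemma qnorm_power: "qnorm (z ^ n) \<le> qnorm z ^ n"
proof (induction n)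
  case (Suc n)
  have "qnorm (z ^ Suc n) \<le> qnorm z * qnorm (z ^ n)"
    using qnorm_mult by simp
  also have "\<dots> \<le> qnorm z * qnorm z ^ n"
    by (rule mult_left_mono[OF Suc.IH infdist_nonneg])
  finally show ?case
    by simp
qed (use qnorm_le_norm[of 1] in simp)

lemma qnorm_one: "1 \<le> qnorm 1"
proof -
  have "1 \<le> norm (1 - m)" if "m \<in> M" for m
  proof (rule ccontr)
    assume "\<not> 1 \<le> norm (1 - m)"
    then obtain w where "m * w = 1"
      using invertible_if_norm_one_diff_less_one by force
    then show False
      using that one_not_mem ideal_mult_right[OF ideal] by metis
  qed
  then show ?thesis
    using qnorm_scaled_greatest[of 1 1 1] by simp
qed

text \<open>Rickart's proof of Gelfand-Mazur, carried out modulo \<open>M\<close>. If no \<open>x - c\<close> lies in \<open>M\<close>,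
  then every \<open>x - c\<close> is invertible modulo \<open>M\<close>, and \<open>c \<mapsto> \<parallel>(x - c)\<^sup>-\<^sup>1 + M\<parallel>\<close> is positive,
  continuous and decays at infinity, so it attains its maximum. Averaging the resolvent over the
  \<open>n\<close>-th roots of unity shows that the set of maximum points is open; hence the function is
  constant, contradicting the decay.\<close>

context
  fixes x :: 'a
  assumes no_scalar_mod: "\<And>c. x - of_complex c \<notin> M"
begin

definition resolvent :: "complex \<Rightarrow> 'a" where
  "resolvent c = (SOME y. (x - of_complex c) * y - 1 \<in> M)"

definition resolvent_norm :: "complex \<Rightarrow> real" where
  "resolvent_norm c = qnorm (resolvent c)"

lemma resolvent_mod: "(x - of_complex c) * resolvent c - 1 \<in> M"
  unfolding resolvent_def using inverse_mod_exists[OF no_scalar_mod] by (rule someI_ex)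

lemma resolvent_norm_pos: "0 < resolvent_norm c"
proof -
  have "1 \<le> qnorm ((x - of_complex c) * resolvent c)"
    using qnorm_one qnorm_cong[OF resolvent_mod] by simp
  also have "\<dots> \<le> qnorm (x - of_complex c) * resolvent_norm c"
    unfolding resolvent_norm_def by (rule qnorm_mult)
  finally have "resolvent_norm c \<noteq> 0"
    by auto
  then show ?thesis
    using infdist_nonneg by (simp add: resolvent_norm_def order_less_le)
qed

lemma resolvent_identity:
  "resolvent c - resolvent d - of_complex (c - d) * (resolvent c * resolvent d) \<in> M"
proof -
  have "resolvent c - resolvent d - of_complex (c - d) * (resolvent c * resolvent d) =
      resolvent d * ((x - of_complex c) * resolvent c - 1)
      - resolvent c * ((x - of_complex d) * resolvent d - 1)"
    by (simp add: of_complex_diff algebra_simps)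
  then show ?thesis
    using resolvent_mod by (simp add: ideal ideal_diff ideal_mult_left)
qed

lemma resolvent_norm_le:
  "resolvent_norm c \<le> resolvent_norm d + cmod (c - d) * resolvent_norm c * resolvent_norm d"
proof -
  have "resolvent_norm c =
      qnorm (resolvent d + of_complex (c - d) * (resolvent c * resolvent d))"
    unfolding resolvent_norm_def
    by (rule qnorm_cong) (use resolvent_identity[of c d] in \<open>simp add: algebra_simps\<close>)
  also have "\<dots> \<le> resolvent_norm d + qnorm (of_complex (c - d) * (resolvent c * resolvent d))"
    unfolding resolvent_norm_def by (rule qnorm_add)
  also have "qnorm (of_complex (c - d) * (resolvent c * resolvent d))
      \<le> cmod (c - d) * qnorm (resolvent c * resolvent d)"
    using qnorm_mult_le_norm[of "of_complex (c - d)"] by simp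
  also have "\<dots> \<le> cmod (c - d) * (resolvent_norm c * resolvent_norm d)"
    unfolding resolvent_norm_def by (intro mult_left_mono qnorm_mult) simp
  finally show ?thesis
    by (simp add: mult.assoc)
qed

lemma isCont_resolvent_norm: "isCont resolvent_norm c"
proof -
  let ?g = resolvent_norm and ?d = "\<lambda>\<mu>. cmod (\<mu> - c) * resolvent_norm c"
  have "((\<lambda>\<mu>. \<mu> - c) \<longlongrightarrow> 0) (at c)"
    using tendsto_diff[OF tendsto_ident_at[of c UNIV] tendsto_const[of c]] by simp
  then have d: "(?d \<longlongrightarrow> 0) (at c)"
    by (rule tendsto_mult_left_zero[OF tendsto_norm_zero])
  have "?g c \<le> ?g \<mu> * (1 + ?d \<mu>)" for \<mu>
    using resolvent_norm_le[of c \<mu>] norm_minus_commute[of c \<mu>] by (simp add: algebra_simps)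
  moreover have "0 < 1 + ?d \<mu>" for \<mu>
    using resolvent_norm_pos[of c] by (simp add: add_pos_nonneg)
  ultimately have lower: "\<forall>\<^sub>F \<mu> in at c. ?g c / (1 + ?d \<mu>) \<le> ?g \<mu>"
    by (intro always_eventually allI) (simp add: pos_divide_le_eq)
  have "?g \<mu> * (1 - ?d \<mu>) \<le> ?g c" for \<mu>
    using resolvent_norm_le[of \<mu> c] by (simp add: algebra_simps)
  then have "?g \<mu> \<le> ?g c / (1 - ?d \<mu>)" if "?d \<mu> < 1" for \<mu>
    using that by (simp add: le_divide_eq)
  then have upper: "\<forall>\<^sub>F \<mu> in at c. ?g \<mu> \<le> ?g c / (1 - ?d \<mu>)"
    using order_tendstoD(2)[OF d, of 1] by (auto elim: eventually_mono)
  have "((\<lambda>\<mu>. ?g c / (1 + ?d \<mu>)) \<longlongrightarrow> ?g c) (at c)"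
    using tendsto_divide[OF tendsto_const[of "?g c"] tendsto_add[OF tendsto_const[of 1] d]] by simp
  moreover have "((\<lambda>\<mu>. ?g c / (1 - ?d \<mu>)) \<longlongrightarrow> ?g c) (at c)"
    using tendsto_divide[OF tendsto_const[of "?g c"] tendsto_diff[OF tendsto_const[of 1] d]] by simp
  ultimately show ?thesis
    unfolding isCont_def using lower upper by (rule tendsto_sandwich[rotated 2])
qed

lemma resolvent_norm_decay: "(cmod c - qnorm x) * resolvent_norm c \<le> 1"
proof -
  have mod: "scaleC c (resolvent c) - (x * resolvent c + - 1) \<in> M"
    using ideal_uminus[OF ideal resolvent_mod[of c]]
    by (simp add: scaleC_conv_of_complex algebra_simps)
  have "cmod c * resolvent_norm c = qnorm (scaleC c (resolvent c))"
    by (simp add: qnorm_scaleC resolvent_norm_def)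
  also have "\<dots> = qnorm (x * resolvent c + - 1)"
    by (rule qnorm_cong[OF mod])
  also have "\<dots> \<le> qnorm x * resolvent_norm c + 1"
    using qnorm_add[of "x * resolvent c" "- 1"] qnorm_mult[of x "resolvent c"]
      qnorm_le_norm[of "- 1"] by (simp add: resolvent_norm_def)
  finally show ?thesis
    by (simp add: algebra_simps)
qed

lemma resolvent_norm_attains_max: "\<exists>c. \<forall>\<mu>. resolvent_norm \<mu> \<le> resolvent_norm c"
proof -
  define r where "r = qnorm x + 1 / resolvent_norm 0"
  have r: "0 \<le> r"
    using resolvent_norm_pos[of 0] infdist_nonneg[of x M] by (simp add: r_def)
  have "continuous_on (cball 0 r) resolvent_norm"
    by (intro continuous_at_imp_continuous_on ballI isCont_resolvent_norm)
  moreover have "cball 0 r \<noteq> {}"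
    using r by simp
  ultimately obtain c where c: "\<And>\<mu>. \<mu> \<in> cball 0 r \<Longrightarrow> resolvent_norm \<mu> \<le> resolvent_norm c"
    using continuous_attains_sup[OF compact_cball] by blast
  have "resolvent_norm \<mu> \<le> resolvent_norm c" for \<mu>
  proof (cases "\<mu> \<in> cball 0 r")
    case False
    then have "1 / resolvent_norm 0 < cmod \<mu> - qnorm x"
      by (simp add: r_def)
    then have "resolvent_norm \<mu> * (1 / resolvent_norm 0) < resolvent_norm \<mu> * (cmod \<mu> - qnorm x)"
      using resolvent_norm_pos by (rule mult_strict_left_mono)
    also have "\<dots> \<le> 1"
      using resolvent_norm_decay[of \<mu>] by (simp add: mult.commute)
    finally have "resolvent_norm \<mu> < resolvent_norm 0"
      using resolvent_norm_pos[of 0] by (simp add: divide_less_eq)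
    then show ?thesis
      using c[of 0] r by simp
  qed (use c in auto)
  then show ?thesis
    by blast
qed

lemma resolvent_expansion:
  "resolvent (c + d) - ((\<Sum>j<n. of_complex d ^ j * resolvent c ^ Suc j)
     + of_complex d ^ n * resolvent c ^ n * resolvent (c + d)) \<in> M"
proof (induction n)
  case 0
  show ?case
    by (simp add: ideal ideal_0)
next
  case (Suc n)
  let ?s = "of_complex d" and ?y = "resolvent c" and ?r = "resolvent (c + d)"
  have "?s ^ n * ?y ^ n * (?r - ?y - ?s * (?r * ?y)) \<in> M"
    using resolvent_identity[of "c + d" c] by (simp add: ideal ideal_mult_left)
  with Suc.IH have "?r - ((\<Sum>j<n. ?s ^ j * ?y ^ Suc j) + ?s ^ n * ?y ^ n * ?r)
      + ?s ^ n * ?y ^ n * (?r - ?y - ?s * (?r * ?y)) \<in> M"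
    by (rule ideal_add[OF ideal])
  moreover have "?r - ((\<Sum>j<n. ?s ^ j * ?y ^ Suc j) + ?s ^ n * ?y ^ n * ?r)
      + ?s ^ n * ?y ^ n * (?r - ?y - ?s * (?r * ?y))
      = ?r - ((\<Sum>j<Suc n. ?s ^ j * ?y ^ Suc j) + ?s ^ Suc n * ?y ^ Suc n * ?r)"
    by (simp add: algebra_simps)
  ultimately show ?case
    by metis
qed

lemma resolvent_average:
  fixes c d :: complex
  assumes "0 < n"
  defines "S \<equiv> \<Sum>k<n. resolvent (c + cis (2 * pi / n) ^ k * d)"
  shows "S - of_nat n * resolvent c - of_complex (d ^ n) * resolvent c ^ n * S \<in> M"
proof -
  define e where "e k = cis (2 * pi / n) ^ k * d" for k
  let ?y = "resolvent c"
  let ?B = "\<lambda>k. \<Sum>j<n. of_complex (e k) ^ j * ?y ^ Suc j"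
  let ?C = "\<lambda>k. of_complex (e k) ^ n * ?y ^ n * resolvent (c + e k)"
  have "(\<Sum>k<n. resolvent (c + e k) - (?B k + ?C k)) \<in> M"
    by (rule ideal_sum[OF ideal]) (rule resolvent_expansion)
  also have "(\<Sum>k<n. resolvent (c + e k) - (?B k + ?C k)) = S - (sum ?B {..<n} + sum ?C {..<n})"
    by (simp only: sum_subtractf sum.distrib S_def e_def)
  also have "sum ?B {..<n} = of_nat n * ?y"
  proof -
    have "sum ?B {..<n} = (\<Sum>j<n. of_complex (\<Sum>k<n. e k ^ j) * ?y ^ Suc j)"
      by (subst sum.swap) (simp add: of_complex_sum of_complex_power sum_distrib_right)
    also have "\<dots> = (\<Sum>j<n. if j = 0 then of_nat n * ?y else 0)"
      using sum_powers_scaled_root_of_unity[OF assms(1)] by (intro sum.cong) (simp_all add: e_def)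
    also have "\<dots> = of_nat n * ?y"
      using assms(1) by simp
    finally show ?thesis .
  qed
  also have "sum ?C {..<n} = of_complex (d ^ n) * ?y ^ n * S"
  proof -
    have "(of_complex (e k) :: 'a) ^ n = of_complex (d ^ n)" for k
      using root_of_unity_power_n[OF assms(1), of k]
      by (simp add: e_def power_mult_distrib flip: of_complex_power)
    then have "sum ?C {..<n} = (\<Sum>k<n. of_complex (d ^ n) * ?y ^ n * resolvent (c + e k))"
      by (intro sum.cong) simp_all
    also have "\<dots> = of_complex (d ^ n) * ?y ^ n * S"
      by (simp add: S_def e_def sum_distrib_left)
    finally show ?thesis .
  qed
  finally show ?thesis
    by (simp only: diff_diff_eq)
qed

lemma qnorm_resolvent_average_ge:
  assumes "0 < n"
  shows "of_nat n * resolvent_norm c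
    \<le> (1 + (cmod d * resolvent_norm c) ^ n) * qnorm (\<Sum>k<n. resolvent (c + cis (2 * pi / n) ^ k * d))"
proof -
  define m where "m = resolvent_norm c"
  define S where "S = (\<Sum>k<n. resolvent (c + cis (2 * pi / n) ^ k * d))"
  have "of_nat n * m = qnorm (scaleC (of_nat n) (resolvent c))"
    by (simp add: qnorm_scaleC m_def resolvent_norm_def)
  also have "\<dots> = qnorm (S - of_complex (d ^ n) * resolvent c ^ n * S)"
    using resolvent_average[OF assms, of c d] ideal_uminus[OF ideal]
    by (intro qnorm_cong) (force simp: S_def scaleC_conv_of_complex algebra_simps)
  also have "\<dots> \<le> qnorm S + qnorm (of_complex (d ^ n) * (resolvent c ^ n * S))"
    using qnorm_diff by (simp add: mult.assoc)
  also have "qnorm (of_complex (d ^ n) * (resolvent c ^ n * S)) \<le> cmod d ^ n * qnorm (resolvent c ^ n * S)"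
    using qnorm_mult_le_norm[of "of_complex (d ^ n)"] by (simp add: norm_power)
  also have "\<dots> \<le> cmod d ^ n * (m ^ n * qnorm S)"
    using qnorm_mult[of "resolvent c ^ n" S]
      mult_right_mono[OF qnorm_power[of "resolvent c" n] infdist_nonneg[of S M]]
    by (intro mult_left_mono) (auto simp: m_def resolvent_norm_def)
  finally show ?thesis
    by (simp add: S_def m_def power_mult_distrib algebra_simps)
qed

lemma qnorm_resolvent_average_le:
  assumes max: "\<And>\<mu>. resolvent_norm \<mu> \<le> resolvent_norm c" and "0 < n"
  shows "qnorm (\<Sum>k<n. resolvent (c + cis (2 * pi / n) ^ k * d))
    \<le> resolvent_norm (c + d) + of_nat (n - 1) * resolvent_norm c"
proof -
  obtain n' where n: "n = Suc n'"
    using \<open>0 < n\<close> by (cases n) auto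
  have "qnorm (\<Sum>k<n. resolvent (c + cis (2 * pi / n) ^ k * d))
      \<le> (\<Sum>k<n. resolvent_norm (c + cis (2 * pi / n) ^ k * d))"
    unfolding resolvent_norm_def by (rule qnorm_sum)
  also have "\<dots> = resolvent_norm (c + d) + (\<Sum>k<n'. resolvent_norm (c + cis (2 * pi / n) ^ Suc k * d))"
    unfolding n sum.lessThan_Suc_shift by simp
  also have "\<dots> \<le> resolvent_norm (c + d) + of_nat n' * resolvent_norm c"
    using sum_bounded_above[of "{..<n'}" _ "resolvent_norm c"] max by simp
  finally show ?thesis
    by (simp add: n)
qed

lemma resolvent_norm_gap:
  assumes max: "\<And>\<mu>. resolvent_norm \<mu> \<le> resolvent_norm c" and "0 < n"
  shows "resolvent_norm c - resolvent_norm (c + d)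
    \<le> of_nat n * (cmod d * resolvent_norm c) ^ n * resolvent_norm c"
proof -
  define m where "m = resolvent_norm c"
  define t where "t = cmod d * m"
  have "0 \<le> t"
    using resolvent_norm_pos[of c] by (simp add: t_def m_def)
  have "of_nat n * m \<le> (1 + t ^ n) * qnorm (\<Sum>k<n. resolvent (c + cis (2 * pi / n) ^ k * d))"
    unfolding t_def m_def by (rule qnorm_resolvent_average_ge[OF \<open>0 < n\<close>])
  also have "\<dots> \<le> (1 + t ^ n) * (resolvent_norm (c + d) + of_nat (n - 1) * m)"
    using \<open>0 \<le> t\<close> unfolding m_def
    by (intro mult_left_mono qnorm_resolvent_average_le[OF max \<open>0 < n\<close>]) simp
  also have "\<dots> \<le> resolvent_norm (c + d) + of_nat (n - 1) * m + t ^ n * (of_nat n * m)"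
  proof -
    have "resolvent_norm (c + d) + of_nat (n - 1) * m \<le> of_nat n * m"
      using max[of "c + d"] \<open>0 < n\<close> by (simp add: m_def of_nat_diff algebra_simps)
    then show ?thesis
      using \<open>0 \<le> t\<close> by (simp add: distrib_right mult_left_mono)
  qed
  finally show ?thesis
    using \<open>0 < n\<close> by (simp add: m_def t_def of_nat_diff algebra_simps)
qed

lemma resolvent_norm_locally_const:
  assumes max: "\<And>\<mu>. resolvent_norm \<mu> \<le> resolvent_norm c"
    and small: "cmod d * resolvent_norm c < 1"
  shows "resolvent_norm (c + d) = resolvent_norm c"
proof -
  define t where "t = cmod d * resolvent_norm c"
  have "(\<lambda>n. of_nat n * t ^ n) \<longlonglongrightarrow> 0"
    using powser_times_n_limit_0[of t] small resolvent_norm_pos[of c] by (simp add: t_def)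
  then have "(\<lambda>n. of_nat n * t ^ n * resolvent_norm c) \<longlonglongrightarrow> 0"
    by (rule tendsto_mult_left_zero)
  then have "resolvent_norm c - resolvent_norm (c + d) \<le> 0"
    unfolding t_def
    by (rule LIMSEQ_le_const) (use resolvent_norm_gap[OF max] in \<open>auto intro!: exI[of _ 1]\<close>)
  with max[of "c + d"] show ?thesis
    by simp
qed

lemma resolvent_norm_const:
  assumes max: "\<And>\<mu>. resolvent_norm \<mu> \<le> resolvent_norm c"
  shows "resolvent_norm \<mu> = resolvent_norm c"
proof -
  define S where "S = {\<mu>. resolvent_norm \<mu> = resolvent_norm c}"
  have "closed S"
    unfolding S_def using isCont_resolvent_norm
    by (intro closed_Collect_eq continuous_at_imp_continuous_on) auto
  moreover have "open S"
  proof (rule openI)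
    fix \<nu> assume "\<nu> \<in> S"
    then have max\<nu>: "resolvent_norm \<mu> \<le> resolvent_norm \<nu>" for \<mu>
      using max by (simp add: S_def)
    have "ball \<nu> (1 / resolvent_norm \<nu>) \<subseteq> S"
    proof
      fix \<mu> assume "\<mu> \<in> ball \<nu> (1 / resolvent_norm \<nu>)"
      then have "cmod (\<mu> - \<nu>) * resolvent_norm \<nu> < 1"
        using resolvent_norm_pos[of \<nu>] by (simp add: dist_norm norm_minus_commute less_divide_eq)
      then show "\<mu> \<in> S"
        using resolvent_norm_locally_const[OF max\<nu>, of "\<mu> - \<nu>"] \<open>\<nu> \<in> S\<close> by (simp add: S_def)
    qed
    then show "\<exists>e>0. ball \<nu> e \<subseteq> S"
      using resolvent_norm_pos[of \<nu>] by (intro exI[of _ "1 / resolvent_norm \<nu>"]) simp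
  qed
  moreover have "c \<in> S"
    by (simp add: S_def)
  ultimately have "S = UNIV"
    using clopen by blast
  then show ?thesis
    by (auto simp: S_def)
qed

lemma no_scalar_mod_absurd: False
proof -
  obtain c where max: "\<And>\<mu>. resolvent_norm \<mu> \<le> resolvent_norm c"
    using resolvent_norm_attains_max by blast
  define m where "m = resolvent_norm c"
  have "0 < m"
    using resolvent_norm_pos by (simp add: m_def)
  define \<mu> where "\<mu> = complex_of_real (qnorm x + 1 / m + 1)"
  have "cmod \<mu> = \<bar>qnorm x + 1 / m + 1\<bar>"
    unfolding \<mu>_def by (rule norm_of_real)
  also have "\<dots> = qnorm x + 1 / m + 1"
    using \<open>0 < m\<close> infdist_nonneg[of x M] by simp
  finally have "cmod \<mu> = qnorm x + 1 / m + 1" .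
  then have "(1 / m + 1) * m \<le> 1"
    using resolvent_norm_decay[of \<mu>] resolvent_norm_const[OF max, of \<mu>] by (simp add: m_def)
  with \<open>0 < m\<close> show False
    by (simp add: algebra_simps)
qed

end

lemma scalar_mod_exists: "\<exists>c. z - of_complex c \<in> M"
  using no_scalar_mod_absurd by blast

lemma scalar_mod_unique:
  assumes "z - of_complex c \<in> M" "z - of_complex c' \<in> M"
  shows "c = c'"
proof (rule ccontr)
  assume "c \<noteq> c'"
  have "of_complex (c - c') = (z - of_complex c') - (z - of_complex c)"
    by (simp add: of_complex_diff)
  also have "\<dots> \<in> M"
    by (rule ideal_diff[OF ideal assms(2,1)])
  finally have "of_complex (c - c') \<in> M" .
  then have "of_complex (inverse (c - c')) * of_complex (c - c') \<in> M"
    by (simp add: ideal ideal_mult_left)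
  with \<open>c \<noteq> c'\<close> show False
    using one_not_mem by (simp flip: of_complex_mult)
qed

definition quotient_char :: "'a \<Rightarrow> complex" where
  "quotient_char z = (THE c. z - of_complex c \<in> M)"

lemma quotient_char_eqI: "z - of_complex c \<in> M \<Longrightarrow> quotient_char z = c"
  unfolding quotient_char_def using scalar_mod_unique by blast

lemma quotient_char_mod: "z - of_complex (quotient_char z) \<in> M"
  using scalar_mod_exists[of z] quotient_char_eqI by blast

lemma quotient_char_mem: "m \<in> M \<Longrightarrow> quotient_char m = 0"
  by (rule quotient_char_eqI) simp

lemma character_quotient_char: "character quotient_char"
proof
  fix z w :: 'a and c :: complex
  have "z + w - of_complex (quotient_char z + quotient_char w)
      = (z - of_complex (quotient_char z)) + (w - of_complex (quotient_char w))"
    by (simp add: of_complex_add)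
  also have "\<dots> \<in> M"
    by (rule ideal_add[OF ideal quotient_char_mod quotient_char_mod])
  finally show "quotient_char (z + w) = quotient_char z + quotient_char w"
    by (rule quotient_char_eqI)
  have "scaleC c z - of_complex (c * quotient_char z) = of_complex c * (z - of_complex (quotient_char z))"
    by (simp add: scaleC_conv_of_complex of_complex_mult algebra_simps)
  also have "\<dots> \<in> M"
    by (rule ideal_mult_left[OF ideal quotient_char_mod])
  finally show "quotient_char (scaleC c z) = c * quotient_char z"
    by (rule quotient_char_eqI)
  have "z * w - of_complex (quotient_char z * quotient_char w)
      = z * (w - of_complex (quotient_char w)) + of_complex (quotient_char w) * (z - of_complex (quotient_char z))"
    by (simp add: of_complex_mult algebra_simps)
  also have "\<dots> \<in> M"
    by (intro ideal_add[OF ideal] ideal_mult_left[OF ideal] quotient_char_mod)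
  finally show "quotient_char (z * w) = quotient_char z * quotient_char w"
    by (rule quotient_char_eqI)
  show "quotient_char 1 = 1"
    by (rule quotient_char_eqI) (simp add: ideal ideal_0)
qed

end

theorem exists_character_vanishing:
  fixes x :: "'a::{complex_normed_algebra_1,banach,comm_ring_1}"
  assumes "\<nexists>y. x * y = 1"
  shows "\<exists>\<phi>. character \<phi> \<and> \<phi> x = 0"
proof -
  have "1 \<notin> range (\<lambda>y. x * y)"
    using assms by auto
  then obtain M where "maximal_ideal M" and "range (\<lambda>y. x * y) \<subseteq> M"
    using exists_maximal_ideal[OF ideal_principal] by blast
  interpret banach_maximal_ideal M
    by (rule banach_maximal_ideal.intro) fact
  have "x \<in> M"
    using \<open>range (\<lambda>y. x * y) \<subseteq> M\<close> by (metis mult_1_right rangeI subsetD)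
  then show ?thesis
    using character_quotient_char quotient_char_mem by blast
qed

definition l1_norm :: "(nat \<Rightarrow> 'a::real_normed_vector) \<Rightarrow> real" where
  "l1_norm a = infsum (\<lambda>n. norm (a n)) {1..}"

lemma l1_norm_nonneg: "0 \<le> l1_norm a"
  unfolding l1_norm_def by (rule infsum_nonneg) simp

lemma sum_norm_le_l1_norm:
  assumes "a \<in> l1" "finite F" "F \<subseteq> {1..}"
  shows "(\<Sum>n\<in>F. norm (a n)) \<le> l1_norm a"
proof -
  have "(\<Sum>n\<in>F. norm (a n)) = infsum (\<lambda>n. norm (a n)) F"
    using assms by simp
  also have "\<dots> \<le> l1_norm a"
    unfolding l1_norm_def by (rule infsum_mono2) (use assms in \<open>auto simp: l1_def\<close>)
  finally show ?thesis .
qed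

lemma norm_le_l1_norm:
  assumes "a \<in> l1"
  shows "norm (a n) \<le> l1_norm a"
proof (cases "n = 0")
  case True
  then show ?thesis
    using assms by (simp add: l1_def l1_norm_nonneg)
next
  case False
  then show ?thesis
    using sum_norm_le_l1_norm[OF assms, of "{n}"] by simp
qed

lemma l1_norm_eq_0_iff: "a \<in> l1 \<Longrightarrow> l1_norm a = 0 \<longleftrightarrow> a = (\<lambda>_. 0)"
  using norm_le_l1_norm[of a] by (auto simp: l1_norm_def)

lemma l1_comparison:
  assumes "a 0 = 0" "g summable_on {1..}" "\<And>n. n \<ge> 1 \<Longrightarrow> norm (a n) \<le> g n"
  shows "a \<in> l1"
proof -
  have "(\<lambda>n. norm (a n)) summable_on {1..}"
    by (rule Infinite_Sum.abs_summable_on_comparison_test'[OF assms(2)]) (use assms(3) in auto)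
  with assms(1) show ?thesis
    by (simp add: l1_def)
qed

lemma l1_finite_support:
  assumes "a 0 = 0" "finite S" "\<And>n. n \<notin> S \<Longrightarrow> a n = 0"
  shows "a \<in> l1"
proof -
  have "(\<lambda>n. norm (a n)) summable_on ({1..} \<inter> S)"
    using assms(2) by simp
  then have "(\<lambda>n. norm (a n)) summable_on {1..}"
    by (rule summable_on_cong_neutral[THEN iffD1, rotated -1]) (use assms(3) in auto)
  with assms(1) show ?thesis
    by (simp add: l1_def)
qed

lemma l1_add: "a \<in> l1 \<Longrightarrow> b \<in> l1 \<Longrightarrow> (\<lambda>n. a n + b n) \<in> l1"
  by (rule l1_comparison[where g = "\<lambda>n. norm (a n) + norm (b n)"])
    (auto simp: l1_def intro: summable_on_add norm_triangle_ineq)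

lemma l1_uminus: "a \<in> l1 \<Longrightarrow> (\<lambda>n. - a n) \<in> l1"
  by (simp add: l1_def)

lemma l1_diff: "a \<in> l1 \<Longrightarrow> b \<in> l1 \<Longrightarrow> (\<lambda>n. a n - b n) \<in> l1"
  using l1_add[of a "\<lambda>n. - b n"] l1_uminus[of b] by simp

lemma l1_scaleR: "a \<in> l1 \<Longrightarrow> (\<lambda>n. r *\<^sub>R a n) \<in> l1"
  by (simp add: l1_def summable_on_cmult_right)

lemma l1_scaleC: "a \<in> l1 \<Longrightarrow> (\<lambda>n. scaleC c (a n :: 'a::complex_normed_algebra_1)) \<in> l1"
  by (simp add: l1_def norm_scaleC summable_on_cmult_right)

lemma l1_norm_add_le:
  assumes "a \<in> l1" "b \<in> l1"
  shows "l1_norm (\<lambda>n. a n + b n) \<le> l1_norm a + l1_norm b"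
proof -
  have "l1_norm (\<lambda>n. a n + b n) \<le> infsum (\<lambda>n. norm (a n) + norm (b n)) {1..}"
    unfolding l1_norm_def using l1_add[OF assms] assms
    by (intro infsum_mono) (auto simp: l1_def intro: summable_on_add norm_triangle_ineq)
  also have "\<dots> = l1_norm a + l1_norm b"
    unfolding l1_norm_def by (rule infsum_add) (use assms in \<open>auto simp: l1_def\<close>)
  finally show ?thesis .
qed

lemma l1_norm_scaleR: "l1_norm (\<lambda>n. r *\<^sub>R a n) = \<bar>r\<bar> * l1_norm a"
  unfolding l1_norm_def by (simp add: infsum_cmult_right')

lemma l1_norm_scaleC: "l1_norm (\<lambda>n. scaleC c (a n :: 'a::complex_normed_algebra_1)) = cmod c * l1_norm a"
  unfolding l1_norm_def by (simp add: norm_scaleC infsum_cmult_right')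

lemma dunit_in_l1: "dunit \<in> l1"
  by (rule l1_finite_support[of _ "{1}"]) (auto simp: dunit_def)

lemma l1_norm_dunit: "l1_norm (dunit :: nat \<Rightarrow> 'a::{real_normed_algebra_1,comm_ring_1}) = 1"
proof -
  have "l1_norm (dunit :: nat \<Rightarrow> 'a) = infsum (\<lambda>n. norm (dunit n :: 'a)) {1}"
    unfolding l1_norm_def by (rule infsum_cong_neutral) (auto simp: dunit_def)
  then show ?thesis
    by (simp add: dunit_def)
qed

lemma l1_norm_pointwise_limit_le:
  assumes lim: "\<And>n. (\<lambda>k. x k n) \<longlonglongrightarrow> f n"
    and x: "\<And>k. x k \<in> l1"
    and bound: "\<forall>\<^sub>F k in sequentially. l1_norm (x k) \<le> e"
  shows "(\<lambda>n. norm (f n)) summable_on {1..}" "l1_norm f \<le> e"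
proof -
  have finite_sums: "(\<Sum>n\<in>F. norm (f n)) \<le> e" if "finite F" "F \<subseteq> {1..}" for F
  proof (rule tendsto_upperbound)
    show "((\<lambda>k. \<Sum>n\<in>F. norm (x k n)) \<longlongrightarrow> (\<Sum>n\<in>F. norm (f n))) sequentially"
      by (intro tendsto_sum tendsto_norm lim)
    show "\<forall>\<^sub>F k in sequentially. (\<Sum>n\<in>F. norm (x k n)) \<le> e"
      using bound by (rule eventually_mono) (rule order.trans[OF sum_norm_le_l1_norm[OF x that]])
  qed simp
  show summable: "(\<lambda>n. norm (f n)) summable_on {1..}"
    by (rule nonneg_bdd_above_summable_on) (use finite_sums in \<open>auto intro!: bdd_aboveI2\<close>)
  show "l1_norm f \<le> e"
    unfolding l1_norm_def by (rule infsum_le_finite_sums[OF summable]) (use finite_sums in auto)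
qed

section \<open>Dirichlet convolution\<close>

lemma finite_divisor_pairs: "0 < n \<Longrightarrow> finite {(k, l). k * l = (n::nat)}"
proof -
  assume "0 < n"
  then have "{(k, l). k * l = n} \<subseteq> {..n} \<times> {..n}"
    by (auto simp: dvd_imp_le)
  then show ?thesis
    by (rule finite_subset) simp
qed

lemma has_sum_product:
  fixes f :: "'i \<Rightarrow> 'a::{real_normed_algebra,banach}" and g :: "'j \<Rightarrow> 'a"
  assumes f: "(\<lambda>k. norm (f k)) summable_on A" and g: "(\<lambda>l. norm (g l)) summable_on B"
  shows "((\<lambda>(k, l). f k * g l) has_sum (infsum f A * infsum g B)) (A \<times> B)"
proof -
  define F where "F = (\<lambda>(k, l). f k * g l)"
  define G where "G = (\<lambda>(k, l). norm (f k) * norm (g l))"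
  have "(\<lambda>p. norm (G p)) summable_on A \<times> B"
  proof (subst Infinite_Sum.abs_summable_on_Sigma_iff, intro conjI ballI)
    show "(\<lambda>l. norm (G (k, l))) summable_on B" for k
      unfolding G_def using summable_on_cmult_right[OF g, of "norm (f k)"] by (simp add: abs_mult)
    have "(\<lambda>k. norm (norm (f k) * infsum (\<lambda>l. norm (g l)) B)) summable_on A"
      using summable_on_cmult_left[OF f, of "infsum (\<lambda>l. norm (g l)) B"]
      by (simp add: abs_mult infsum_nonneg)
    then show "(\<lambda>k. norm (infsum (\<lambda>l. norm (G (k, l))) B)) summable_on A"
      unfolding G_def by (simp add: abs_mult infsum_cmult_right')
  qed
  then have "(\<lambda>p. norm (F p)) summable_on A \<times> B"
    by (rule Infinite_Sum.abs_summable_on_comparison_test) (auto simp: F_def G_def norm_mult_ineq)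
  then have F: "F summable_on A \<times> B"
    by (rule abs_summable_summable)
  have "infsum F (A \<times> B) = infsum (\<lambda>k. infsum (\<lambda>l. f k * g l) B) A"
    using infsum_Sigma_banach[of F A "\<lambda>_. B"] F by (simp add: F_def)
  also have "\<dots> = infsum f A * infsum g B"
    using abs_summable_summable[OF f] abs_summable_summable[OF g]
    by (simp add: infsum_cmult_right infsum_cmult_left)
  finally show ?thesis
    using F has_sum_infsum unfolding F_def by metis
qed

lemma has_sum_dirichlet_product:
  fixes f g :: "nat \<Rightarrow> 'a::{real_normed_algebra,banach}"
  assumes "(\<lambda>n. norm (f n)) summable_on {1..}" and "(\<lambda>n. norm (g n)) summable_on {1..}"
  shows "((\<lambda>n. \<Sum>(k, l)\<in>{(k, l). k * l = n}. f k * g l) has_sum (infsum f {1..} * infsum g {1..})) {1..}"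
proof -
  define F where "F = (\<lambda>(k, l). f k * g l)"
  have "((\<lambda>(n, p). F p) has_sum (infsum f {1..} * infsum g {1..})) (SIGMA n:{1..}. {(k, l). k * l = n})
    \<longleftrightarrow> (F has_sum (infsum f {1..} * infsum g {1..})) ({1..} \<times> {1..})"
    by (rule has_sum_reindex_bij_witness[where j = snd and i = "\<lambda>(k, l). (k * l, (k, l))"])
      (auto simp: Suc_le_eq)
  then have "((\<lambda>(n, p). F p) has_sum (infsum f {1..} * infsum g {1..})) (SIGMA n:{1..}. {(k, l). k * l = n})"
    using has_sum_product[OF assms] by (simp add: F_def)
  moreover have "((\<lambda>p. (\<lambda>(n, p). F p) (n, p)) has_sum sum F {(k, l). k * l = n}) {(k, l). k * l = n}"
    if "n \<in> {1..}" for n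
    using that by (simp add: finite_divisor_pairs)
  ultimately have "((\<lambda>n. sum F {(k, l). k * l = n}) has_sum (infsum f {1..} * infsum g {1..})) {1..}"
    by (rule has_sum_SigmaD)
  then show ?thesis
    by (simp add: F_def)
qed

lemma dconv_eq_sum: "0 < n \<Longrightarrow> dconv a b n = (\<Sum>p\<in>{(k, l). k * l = n}. a (fst p) * b (snd p))"
  by (simp add: dconv_def case_prod_beta)

lemma dconv_0 [simp]: "dconv a b 0 = 0"
  by (simp add: dconv_def)

lemma dconv_commute: "dconv a b = dconv b a"
proof
  fix n :: nat
  show "dconv a b n = dconv b a n"
  proof (cases "n = 0")
    case False
    then have "0 < n"
      by simp
    then show ?thesis
      unfolding dconv_eq_sum[OF \<open>0 < n\<close>]
      by (intro sum.reindex_bij_witness[where i = prod.swap and j = prod.swap])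
        (auto simp: mult.commute)
  qed simp
qed

lemma dconv_as_triple_sum:
  assumes "0 < n"
  shows "dconv (dconv a b) c n = (\<Sum>(i, j, k)\<in>{(i, j, k). i * j * k = n}. a i * b j * c k)"
    and "dconv a (dconv b c) n = (\<Sum>(i, j, k)\<in>{(i, j, k). i * j * k = n}. a i * b j * c k)"
proof -
  define P where "P m = {(k, l). k * l = (m::nat)}" for m
  have P: "finite (P m)" if "0 < m" for m
    using finite_divisor_pairs[OF that] by (simp add: P_def)
  have pos: "0 < fst p" "0 < snd p" if "p \<in> P n" for p
    using that assms by (auto simp: P_def)
  have "dconv (dconv a b) c n = (\<Sum>p\<in>P n. \<Sum>q\<in>P (fst p). a (fst q) * b (snd q) * c (snd p))"
    unfolding dconv_eq_sum[OF assms] P_def[symmetric] using pos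
    by (intro sum.cong) (simp_all add: dconv_eq_sum P_def sum_distrib_right)
  also have "\<dots> = (\<Sum>(p, q)\<in>Sigma (P n) (\<lambda>p. P (fst p)). a (fst q) * b (snd q) * c (snd p))"
    using P pos assms by (intro sum.Sigma) auto
  also have "\<dots> = (\<Sum>(i, j, k)\<in>{(i, j, k). i * j * k = n}. a i * b j * c k)"
    by (rule sum.reindex_bij_witness[where j = "\<lambda>(p, q). (fst q, snd q, snd p)"
        and i = "\<lambda>(i, j, k). ((i * j, k), (i, j))"]) (auto simp: P_def)
  finally show "dconv (dconv a b) c n = (\<Sum>(i, j, k)\<in>{(i, j, k). i * j * k = n}. a i * b j * c k)" .
  have "dconv a (dconv b c) n = (\<Sum>p\<in>P n. \<Sum>q\<in>P (snd p). a (fst p) * b (fst q) * c (snd q))"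
    unfolding dconv_eq_sum[OF assms] P_def[symmetric] using pos
    by (intro sum.cong) (simp_all add: dconv_eq_sum P_def sum_distrib_left mult.assoc)
  also have "\<dots> = (\<Sum>(p, q)\<in>Sigma (P n) (\<lambda>p. P (snd p)). a (fst p) * b (fst q) * c (snd q))"
    using P pos assms by (intro sum.Sigma) auto
  also have "\<dots> = (\<Sum>(i, j, k)\<in>{(i, j, k). i * j * k = n}. a i * b j * c k)"
    by (rule sum.reindex_bij_witness[where j = "\<lambda>(p, q). (fst p, fst q, snd q)"
        and i = "\<lambda>(i, j, k). ((i, j * k), (j, k))"]) (auto simp: P_def mult.assoc)
  finally show "dconv a (dconv b c) n = (\<Sum>(i, j, k)\<in>{(i, j, k). i * j * k = n}. a i * b j * c k)" .
qed

lemma dconv_assoc: "dconv (dconv a b) c = dconv a (dconv b c)"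
proof
  fix n :: nat
  show "dconv (dconv a b) c n = dconv a (dconv b c) n"
    by (cases "n = 0") (simp_all add: dconv_as_triple_sum)
qed

lemma dconv_add_left: "dconv (\<lambda>n. a n + b n) c = (\<lambda>n. dconv a c n + dconv b c n)"
  by (simp add: fun_eq_iff dconv_def sum.distrib distrib_right case_prod_beta)

lemma dconv_scaleR_left:
  "dconv (\<lambda>n. r *\<^sub>R a n) (b :: nat \<Rightarrow> 'a::{real_algebra,comm_ring_1}) = (\<lambda>n. r *\<^sub>R dconv a b n)"
  by (simp add: fun_eq_iff dconv_def scaleR_sum_right case_prod_beta)

lemma dconv_scaleC_left:
  "dconv (\<lambda>n. scaleC c (a n)) (b :: nat \<Rightarrow> 'a::{complex_normed_algebra_1,comm_ring_1})
    = (\<lambda>n. scaleC c (dconv a b n))"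
  by (simp add: fun_eq_iff dconv_def scaleC_conv_of_complex sum_distrib_left case_prod_beta mult.assoc)

lemma dunit_dconv: "a 0 = 0 \<Longrightarrow> dconv dunit a = a"
proof
  fix n assume "a 0 = 0"
  show "dconv dunit a n = a n"
  proof (cases "n = 0")
    case False
    then have "0 < n"
      by simp
    then have "dconv dunit a n = (\<Sum>p\<in>{(k, l). k * l = n}. if p = (1, n) then a n else 0)"
      unfolding dconv_eq_sum[OF \<open>0 < n\<close>] by (intro sum.cong) (auto simp: dunit_def)
    also have "\<dots> = a n"
      using finite_divisor_pairs[of n] False by (simp add: sum.delta')
    finally show ?thesis .
  qed (simp add: \<open>a 0 = 0\<close>)
qed

lemma dconv_in_l1:
  fixes a b :: "nat \<Rightarrow> 'a::{real_normed_algebra,banach,comm_ring_1}"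
  assumes a: "a \<in> l1" and b: "b \<in> l1"
  shows "dconv a b \<in> l1" and "l1_norm (dconv a b) \<le> l1_norm a * l1_norm b"
proof -
  let ?g = "\<lambda>n. \<Sum>(k, l)\<in>{(k, l). k * l = n}. norm (a k) * norm (b l)"
  have g: "(?g has_sum (l1_norm a * l1_norm b)) {1..}"
    using has_sum_dirichlet_product[of "\<lambda>n. norm (a n)" "\<lambda>n. norm (b n)"] a b
    by (simp add: l1_def l1_norm_def)
  have bound: "norm (dconv a b n) \<le> ?g n" if "n \<ge> 1" for n
  proof -
    have "norm (dconv a b n) \<le> (\<Sum>(k, l)\<in>{(k, l). k * l = n}. norm (a k * b l))"
      unfolding dconv_def using that by (simp add: case_prod_beta norm_sum)
    also have "\<dots> \<le> ?g n"
      by (rule sum_mono) (auto simp: norm_mult_ineq)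
    finally show ?thesis .
  qed
  show l1: "dconv a b \<in> l1"
    using g bound by (intro l1_comparison[where g = ?g]) (auto simp: summable_on_def)
  have "l1_norm (dconv a b) \<le> infsum ?g {1..}"
    unfolding l1_norm_def using l1 g bound
    by (intro infsum_mono) (auto simp: l1_def summable_on_def)
  also have "\<dots> = l1_norm a * l1_norm b"
    using g by (rule infsumI)
  finally show "l1_norm (dconv a b) \<le> l1_norm a * l1_norm b" .
qed

definition single :: "nat \<Rightarrow> 'a::zero \<Rightarrow> nat \<Rightarrow> 'a" where
  "single n x m = (if m = n \<and> m \<noteq> 0 then x else 0)"

lemma single_in_l1: "single n x \<in> l1"
  by (rule l1_finite_support[of _ "{n}"]) (auto simp: single_def)

lemma l1_norm_single: "n \<noteq> 0 \<Longrightarrow> l1_norm (single n x) = norm x"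
proof -
  assume "n \<noteq> 0"
  have "l1_norm (single n x) = infsum (\<lambda>m. norm (single n x m)) {n}"
    unfolding l1_norm_def by (rule infsum_cong_neutral) (auto simp: single_def)
  with \<open>n \<noteq> 0\<close> show ?thesis
    by (simp add: single_def)
qed

lemma dconv_single:
  assumes "m \<ge> 1" "n \<ge> 1"
  shows "dconv (single m x) (single n y) = single (m * n) (x * y :: 'a::comm_ring_1)"
proof
  fix N :: nat
  show "dconv (single m x) (single n y) N = single (m * n) (x * y) N"
  proof (cases "N = 0")
    case False
    then have "0 < N"
      by simp
    then have "dconv (single m x) (single n y) N
        = (\<Sum>p\<in>{(k, l). k * l = N}. if p = (m, n) then x * y else 0)"
      unfolding dconv_eq_sum[OF \<open>0 < N\<close>] using assms
      by (intro sum.cong) (auto simp: single_def)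
    also have "\<dots> = single (m * n) (x * y) N"
      using finite_divisor_pairs[of N] False by (auto simp: sum.delta' single_def)
    finally show ?thesis .
  qed (simp add: single_def)
qed

section \<open>The Banach algebra \<open>\<ell>\<^sup>1(\<nat>, A)\<close>\<close>

typedef (overloaded) ('a::"{complex_normed_algebra_1,banach,comm_ring_1}") dirichlet_l1 =
  "l1 :: (nat \<Rightarrow> 'a) set"
  morphisms l1_coeffs Abs_dirichlet_l1
  by (rule exI[of _ "\<lambda>_. 0"]) (simp add: l1_def)

setup_lifting type_definition_dirichlet_l1

instantiation dirichlet_l1 :: ("{complex_normed_algebra_1,banach,comm_ring_1}") comm_ring_1
begin

lift_definition zero_dirichlet_l1 :: "'a dirichlet_l1" is "\<lambda>_. 0"
  by (simp add: l1_def)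

lift_definition one_dirichlet_l1 :: "'a dirichlet_l1" is dunit
  by (rule dunit_in_l1)

lift_definition plus_dirichlet_l1 :: "'a dirichlet_l1 \<Rightarrow> 'a dirichlet_l1 \<Rightarrow> 'a dirichlet_l1"
  is "\<lambda>a b n. a n + b n"
  by (rule l1_add)

lift_definition minus_dirichlet_l1 :: "'a dirichlet_l1 \<Rightarrow> 'a dirichlet_l1 \<Rightarrow> 'a dirichlet_l1"
  is "\<lambda>a b n. a n - b n"
  by (rule l1_diff)

lift_definition uminus_dirichlet_l1 :: "'a dirichlet_l1 \<Rightarrow> 'a dirichlet_l1" is "\<lambda>a n. - a n"
  by (rule l1_uminus)

lift_definition times_dirichlet_l1 :: "'a dirichlet_l1 \<Rightarrow> 'a dirichlet_l1 \<Rightarrow> 'a dirichlet_l1"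
  is dconv
  by (rule dconv_in_l1)

instance
proof
  fix a b c :: "'a dirichlet_l1"
  show "a * b * c = a * (b * c)"
    by transfer (rule dconv_assoc)
  show "a * b = b * a"
    by transfer (rule dconv_commute)
  show "1 * a = a"
    by transfer (simp add: dunit_dconv l1_def)
  show "a + b + c = a + (b + c)"
    by transfer (simp add: add.assoc)
  show "a + b = b + a"
    by transfer (simp add: add.commute)
  show "0 + a = a"
    by transfer simp
  show "- a + a = 0"
    by transfer simp
  show "a - b = a + - b"
    by transfer simp
  show "(a + b) * c = a * c + b * c"
    by transfer (rule dconv_add_left)
  show "(0::'a dirichlet_l1) \<noteq> 1"
    by transfer (auto simp: dunit_def fun_eq_iff)
qed

end

instantiation dirichlet_l1 :: ("{complex_normed_algebra_1,banach,comm_ring_1}") real_normed_algebra_1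
begin

lift_definition scaleR_dirichlet_l1 :: "real \<Rightarrow> 'a dirichlet_l1 \<Rightarrow> 'a dirichlet_l1"
  is "\<lambda>r a n. r *\<^sub>R a n"
  by (rule l1_scaleR)

lift_definition norm_dirichlet_l1 :: "'a dirichlet_l1 \<Rightarrow> real" is l1_norm .

definition dist_dirichlet_l1 :: "'a dirichlet_l1 \<Rightarrow> 'a dirichlet_l1 \<Rightarrow> real" where
  "dist_dirichlet_l1 a b = norm (a - b)"

definition sgn_dirichlet_l1 :: "'a dirichlet_l1 \<Rightarrow> 'a dirichlet_l1" where
  "sgn_dirichlet_l1 a = inverse (norm a) *\<^sub>R a"

definition uniformity_dirichlet_l1 :: "('a dirichlet_l1 \<times> 'a dirichlet_l1) filter" where
  "uniformity_dirichlet_l1 = (INF e\<in>{0<..}. principal {(a, b). dist a b < e})"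

definition open_dirichlet_l1 :: "'a dirichlet_l1 set \<Rightarrow> bool" where
  "open_dirichlet_l1 U = (\<forall>a\<in>U. \<forall>\<^sub>F (a', b) in uniformity. a' = a \<longrightarrow> b \<in> U)"

instance
proof
  fix a b :: "'a dirichlet_l1" and r s :: real and U :: "'a dirichlet_l1 set"
  show "r *\<^sub>R (a + b) = r *\<^sub>R a + r *\<^sub>R b"
    by transfer (simp add: scaleR_add_right)
  show "(r + s) *\<^sub>R a = r *\<^sub>R a + s *\<^sub>R a"
    by transfer (simp add: scaleR_add_left)
  show "r *\<^sub>R s *\<^sub>R a = (r * s) *\<^sub>R a"
    by transfer simp
  show "1 *\<^sub>R a = a"
    by transfer simp
  show "r *\<^sub>R a * b = r *\<^sub>R (a * b)"
    by transfer (rule dconv_scaleR_left)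
  show "a * r *\<^sub>R b = r *\<^sub>R (a * b)"
    by transfer (metis dconv_commute dconv_scaleR_left)
  show "dist a b = norm (a - b)"
    by (rule dist_dirichlet_l1_def)
  show "sgn a = inverse (norm a) *\<^sub>R a"
    by (rule sgn_dirichlet_l1_def)
  show "uniformity = (INF e\<in>{0<..}. principal {(a, b :: 'a dirichlet_l1). dist a b < e})"
    by (rule uniformity_dirichlet_l1_def)
  show "open U = (\<forall>a\<in>U. \<forall>\<^sub>F (a', b) in uniformity. a' = a \<longrightarrow> b \<in> U)"
    by (rule open_dirichlet_l1_def)
  show "norm a = 0 \<longleftrightarrow> a = 0"
    by transfer (simp add: l1_norm_eq_0_iff)
  show "norm (a + b) \<le> norm a + norm b"
    by transfer (rule l1_norm_add_le)
  show "norm (r *\<^sub>R a) = \<bar>r\<bar> * norm a"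
    by transfer (rule l1_norm_scaleR)
  show "norm (a * b) \<le> norm a * norm b"
    by transfer (rule dconv_in_l1(2))
  show "norm (1 :: 'a dirichlet_l1) = 1"
    by transfer (rule l1_norm_dunit)
qed

end

lemma norm_dirichlet_l1_diff: "norm (a - b) = l1_norm (\<lambda>n. l1_coeffs a n - l1_coeffs b n)"
  by (simp add: norm_dirichlet_l1.rep_eq minus_dirichlet_l1.rep_eq)

lemma l1_Cauchy_imp_Cauchy_coeff:
  fixes x :: "nat \<Rightarrow> nat \<Rightarrow> 'a::real_normed_vector"
  assumes x: "\<And>j. x j \<in> l1"
    and Cauchy: "\<And>e. 0 < e \<Longrightarrow> \<exists>N. \<forall>j\<ge>N. \<forall>k\<ge>N. l1_norm (\<lambda>n. x j n - x k n) < e"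
  shows "Cauchy (\<lambda>j. x j n)"
proof (rule metric_CauchyI)
  fix e :: real assume "0 < e"
  then obtain N where "\<forall>j\<ge>N. \<forall>k\<ge>N. l1_norm (\<lambda>n. x j n - x k n) < e"
    using Cauchy by blast
  moreover have "dist (x j n) (x k n) \<le> l1_norm (\<lambda>n. x j n - x k n)" for j k
    unfolding dist_norm by (rule norm_le_l1_norm[OF l1_diff[OF x x]])
  ultimately have "\<forall>j\<ge>N. \<forall>k\<ge>N. dist (x j n) (x k n) < e"
    by (meson order.strict_trans1)
  then show "\<exists>N. \<forall>j\<ge>N. \<forall>k\<ge>N. dist (x j n) (x k n) < e"
    by blast
qed

lemma l1_Cauchy_limit:
  fixes x :: "nat \<Rightarrow> nat \<Rightarrow> 'a::banach"
  assumes x: "\<And>j. x j \<in> l1"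
    and Cauchy: "\<And>e. 0 < e \<Longrightarrow> \<exists>N. \<forall>j\<ge>N. \<forall>k\<ge>N. l1_norm (\<lambda>n. x j n - x k n) < e"
  shows "\<exists>f\<in>l1. \<forall>e>0. \<exists>N. \<forall>j\<ge>N. l1_norm (\<lambda>n. x j n - f n) \<le> e"
proof -
  have "Cauchy (\<lambda>j. x j n)" for n
    by (rule l1_Cauchy_imp_Cauchy_coeff[OF x Cauchy])
  then have "convergent (\<lambda>j. x j n)" for n
    by (rule Cauchy_convergent)
  then obtain f where f: "\<And>n. (\<lambda>j. x j n) \<longlonglongrightarrow> f n"
    unfolding convergent_def by metis
  have tail: "\<exists>N. \<forall>j\<ge>N. (\<lambda>n. norm (x j n - f n)) summable_on {1..}
      \<and> l1_norm (\<lambda>n. x j n - f n) \<le> e" if "0 < e" for e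
  proof -
    obtain N where N: "\<forall>j\<ge>N. \<forall>k\<ge>N. l1_norm (\<lambda>n. x j n - x k n) < e"
      using Cauchy \<open>0 < e\<close> by blast
    have "(\<lambda>n. norm (x j n - f n)) summable_on {1..} \<and> l1_norm (\<lambda>n. x j n - f n) \<le> e"
      if "N \<le> j" for j
    proof -
      have lim: "(\<lambda>k. x j n - x k n) \<longlonglongrightarrow> x j n - f n" for n
        by (intro tendsto_diff tendsto_const f)
      have "\<forall>\<^sub>F k in sequentially. l1_norm (\<lambda>n. x j n - x k n) \<le> e"
        using N that unfolding eventually_sequentially by (intro exI[of _ N]) (auto intro: less_imp_le)
      then show ?thesis
        using l1_norm_pointwise_limit_le[OF lim l1_diff[OF x x]] by blast
    qed
    then show ?thesis
      by blast
  qed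
  then obtain N where N: "(\<lambda>n. norm (x N n - f n)) summable_on {1..}"
    using zero_less_one by blast
  have "(\<lambda>j. 0) \<longlonglongrightarrow> f 0"
    using f[of 0] x by (simp add: l1_def)
  then have "(\<lambda>n. x N n - f n) \<in> l1"
    using N x[of N] by (simp add: l1_def LIMSEQ_const_iff)
  then have "f \<in> l1"
    using l1_diff[OF x[of N]] by force
  moreover have "\<exists>N. \<forall>j\<ge>N. l1_norm (\<lambda>n. x j n - f n) \<le> e" if "0 < e" for e
    using tail[OF that] by blast
  ultimately show ?thesis
    by blast
qed

lemma Cauchy_dirichlet_l1_convergent:
  fixes X :: "nat \<Rightarrow> 'a::{complex_normed_algebra_1,banach,comm_ring_1} dirichlet_l1"
  assumes "Cauchy X"
  shows "convergent X"
proof -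
  have "\<exists>N. \<forall>j\<ge>N. \<forall>k\<ge>N. l1_norm (\<lambda>n. l1_coeffs (X j) n - l1_coeffs (X k) n) < e" if "0 < e" for e
    using metric_CauchyD[OF assms that] by (simp add: dist_norm norm_dirichlet_l1_diff)
  then obtain f where f: "f \<in> l1"
    and tail: "\<And>e. 0 < e \<Longrightarrow> \<exists>N. \<forall>j\<ge>N. l1_norm (\<lambda>n. l1_coeffs (X j) n - f n) \<le> e"
    using l1_Cauchy_limit[OF l1_coeffs] by blast
  have "X \<longlonglongrightarrow> Abs_dirichlet_l1 f"
  proof (rule LIMSEQ_I)
    fix r :: real assume "0 < r"
    then obtain N where N: "\<forall>j\<ge>N. l1_norm (\<lambda>n. l1_coeffs (X j) n - f n) \<le> r / 2"
      using tail[of "r / 2"] by auto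
    have "norm (X j - Abs_dirichlet_l1 f) < r" if "N \<le> j" for j
      using N[rule_format, OF that] \<open>0 < r\<close> f by (simp add: norm_dirichlet_l1_diff Abs_dirichlet_l1_inverse)
    then show "\<exists>N. \<forall>j\<ge>N. norm (X j - Abs_dirichlet_l1 f) < r"
      by blast
  qed
  then show ?thesis
    by (rule convergentI)
qed

instance dirichlet_l1 :: ("{complex_normed_algebra_1,banach,comm_ring_1}") banach
  by standard (rule Cauchy_dirichlet_l1_convergent)

instantiation dirichlet_l1 :: ("{complex_normed_algebra_1,banach,comm_ring_1}") complex_normed_algebra_1
begin

lift_definition scaleC_dirichlet_l1 :: "complex \<Rightarrow> 'a dirichlet_l1 \<Rightarrow> 'a dirichlet_l1"
  is "\<lambda>c a n. scaleC c (a n)"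
  by (rule l1_scaleC)

instance
proof
  fix a b :: "'a dirichlet_l1" and c d :: complex and r :: real
  show "scaleC c (a + b) = scaleC c a + scaleC c b"
    by transfer (simp add: scaleC_add_right)
  show "scaleC (c + d) a = scaleC c a + scaleC d a"
    by transfer (simp add: scaleC_add_left)
  show "scaleC c (scaleC d a) = scaleC (c * d) a"
    by transfer (simp add: scaleC_scaleC)
  show "scaleC 1 a = a"
    by transfer (simp add: scaleC_one)
  show "scaleC (complex_of_real r) a = r *\<^sub>R a"
    by transfer (simp add: scaleC_of_real)
  show "norm (scaleC c a) = cmod c * norm a"
    by transfer (rule l1_norm_scaleC)
  show "scaleC c a * b = scaleC c (a * b)"
    by transfer (rule dconv_scaleC_left)
  show "a * scaleC c b = scaleC c (a * b)"
    by transfer (metis dconv_commute dconv_scaleC_left)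
qed

end

lift_definition l1_single :: "nat \<Rightarrow> 'a \<Rightarrow> 'a::{complex_normed_algebra_1,banach,comm_ring_1} dirichlet_l1"
  is single
  by (rule single_in_l1)

lemma l1_single_mult: "1 \<le> m \<Longrightarrow> 1 \<le> n \<Longrightarrow> l1_single m x * l1_single n y = l1_single (m * n) (x * y)"
  by transfer (rule dconv_single)

lemma l1_single_add: "l1_single n (x + y) = l1_single n x + l1_single n y"
  by transfer (auto simp: single_def)

lemma l1_single_scaleC: "l1_single n (scaleC c x) = scaleC c (l1_single n x)"
  by transfer (auto simp: single_def)

lemma l1_single_one: "l1_single 1 1 = 1"
  by transfer (auto simp: single_def dunit_def)

lemma norm_l1_single: "1 \<le> n \<Longrightarrow> norm (l1_single n x) = norm x"
  by transfer (simp add: l1_norm_single)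

lemma l1_coeffs_sum: "l1_coeffs (\<Sum>n\<in>F. f n) = (\<lambda>m. \<Sum>n\<in>F. l1_coeffs (f n) m)"
  by (induction F rule: infinite_finite_induct)
    (auto simp: zero_dirichlet_l1.rep_eq plus_dirichlet_l1.rep_eq)

lemma has_sum_l1_single:
  assumes "a \<in> l1"
  shows "((\<lambda>n. l1_single n (a n)) has_sum Abs_dirichlet_l1 a) {1..}"
proof -
  have norms: "((\<lambda>n. norm (a n)) has_sum l1_norm a) {1..}"
    using assms by (simp add: l1_def l1_norm_def)
  have "dist (\<Sum>n\<in>F. l1_single n (a n)) (Abs_dirichlet_l1 a) = dist (\<Sum>n\<in>F. norm (a n)) (l1_norm a)"
    if "finite F" "F \<subseteq> {1..}" for F
  proof -
    have "l1_coeffs (\<Sum>n\<in>F. l1_single n (a n)) m = (\<Sum>n\<in>F. if n = m then a m else 0)" for m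
      unfolding l1_coeffs_sum l1_single.rep_eq using that by (intro sum.cong) (auto simp: single_def)
    then have "l1_coeffs (\<Sum>n\<in>F. l1_single n (a n)) m = (if m \<in> F then a m else 0)" for m
      using \<open>finite F\<close> by simp
    then have "dist (\<Sum>n\<in>F. l1_single n (a n)) (Abs_dirichlet_l1 a)
        = infsum (\<lambda>m. norm (a m)) ({1..} - F)"
      unfolding dist_norm norm_dirichlet_l1_diff Abs_dirichlet_l1_inverse[OF assms[unfolded mem_Collect_eq]]
        l1_norm_def by (intro infsum_cong_neutral) auto
    also have "\<dots> = l1_norm a - (\<Sum>n\<in>F. norm (a n))"
      using has_sum_Diff[OF norms has_sum_finite[OF \<open>finite F\<close>] \<open>F \<subseteq> {1..}\<close>] by (rule infsumI)
    also have "\<dots> = dist (\<Sum>n\<in>F. norm (a n)) (l1_norm a)"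
      using sum_norm_le_l1_norm[OF assms that] by (simp add: dist_real_def)
    finally show ?thesis .
  qed
  then have "\<forall>\<^sub>F F in finite_subsets_at_top {1..}.
      dist (\<Sum>n\<in>F. l1_single n (a n)) (Abs_dirichlet_l1 a) \<le> dist (\<Sum>n\<in>F. norm (a n)) (l1_norm a)"
    by (intro eventually_finite_subsets_at_top_weakI) simp
  with norms show ?thesis
    unfolding has_sum_def by (rule metric_tendsto_imp_tendsto)
qed

section \<open>Semicharacters and the Gelfand transform\<close>

lemma semicharacter_1: "semicharacter chi \<Longrightarrow> chi 1 = 1"
  unfolding semicharacter_def by (metis mult_1 mult_cancel_right2 order_refl)

lemma semicharacter_mult: "semicharacter chi \<Longrightarrow> 1 \<le> m \<Longrightarrow> 1 \<le> n \<Longrightarrow> chi (m * n) = chi m * chi n"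
  unfolding semicharacter_def by blast

lemma summable_on_norm_gtrans_terms:
  assumes "a \<in> l1" "semicharacter chi"
  shows "(\<lambda>n. norm (scaleC (chi n) (a n))) summable_on {1..}"
proof -
  obtain B where B: "\<And>n. 1 \<le> n \<Longrightarrow> cmod (chi n) \<le> B"
    using assms(2) by (auto simp: semicharacter_def)
  show ?thesis
  proof (rule Infinite_Sum.abs_summable_on_comparison_test')
    show "(\<lambda>n. B * norm (a n)) summable_on {1..}"
      using assms(1) by (simp add: l1_def summable_on_cmult_right)
    show "norm (scaleC (chi n) (a n)) \<le> B * norm (a n)" if "n \<in> {1..}" for n
      using B[of n] that by (simp add: norm_scaleC mult_right_mono)
  qed
qed

lemma has_sum_gtrans:
  "a \<in> l1 \<Longrightarrow> semicharacter chi \<Longrightarrow> ((\<lambda>n. scaleC (chi n) (a n)) has_sum gtrans a chi) {1..}"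
  unfolding gtrans_def by (rule has_sum_infsum, rule abs_summable_summable, rule summable_on_norm_gtrans_terms)

lemma gtrans_dconv:
  assumes a: "a \<in> l1" and b: "b \<in> l1" and chi: "semicharacter chi"
  shows "gtrans (dconv a b) chi = gtrans a chi * gtrans b chi"
proof -
  define f where "f = (\<lambda>n. scaleC (chi n) (a n))"
  define g where "g = (\<lambda>n. scaleC (chi n) (b n))"
  have "scaleC (chi n) (dconv a b n) = (\<Sum>(k, l)\<in>{(k, l). k * l = n}. f k * g l)" if "n \<in> {1..}" for n
  proof -
    have chi_mult: "chi n = chi k * chi l" if "k * l = n" for k l
      using semicharacter_mult[OF chi, of k l] that \<open>n \<in> {1..}\<close> by (auto simp: Suc_le_eq)
    have "scaleC (chi n) (dconv a b n) = (\<Sum>(k, l)\<in>{(k, l). k * l = n}. of_complex (chi n) * (a k * b l))"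
      using that by (simp add: dconv_def scaleC_conv_of_complex sum_distrib_left case_prod_beta)
    also have "\<dots> = (\<Sum>(k, l)\<in>{(k, l). k * l = n}. f k * g l)"
    proof (rule sum.cong[OF refl])
      fix p assume "p \<in> {(k, l). k * l = n}"
      then obtain k l where p: "p = (k, l)" and "k * l = n"
        by blast
      from \<open>k * l = n\<close> have "chi n = chi k * chi l"
        by (rule chi_mult)
      then show "(case p of (k, l) \<Rightarrow> of_complex (chi n) * (a k * b l)) = (case p of (k, l) \<Rightarrow> f k * g l)"
        by (simp add: p f_def g_def scaleC_conv_of_complex of_complex_mult mult_ac)
    qed
    finally show ?thesis .
  qed
  then have "gtrans (dconv a b) chi = infsum (\<lambda>n. \<Sum>(k, l)\<in>{(k, l). k * l = n}. f k * g l) {1..}"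
    unfolding gtrans_def by (rule infsum_cong)
  also have "\<dots> = infsum f {1..} * infsum g {1..}"
    using summable_on_norm_gtrans_terms[OF a chi] summable_on_norm_gtrans_terms[OF b chi]
    by (intro infsumI has_sum_dirichlet_product) (simp_all add: f_def g_def)
  also have "\<dots> = gtrans a chi * gtrans b chi"
    by (simp only: gtrans_def f_def g_def)
  finally show ?thesis .
qed

lemma gtrans_dunit: "semicharacter chi \<Longrightarrow> gtrans dunit chi = 1"
proof -
  assume "semicharacter chi"
  have "gtrans dunit chi = infsum (\<lambda>n. scaleC (chi n) (dunit n)) {1}"
    unfolding gtrans_def by (rule infsum_cong_neutral) (auto simp: dunit_def)
  with semicharacter_1[OF \<open>semicharacter chi\<close>] show ?thesis
    by (simp add: dunit_def scaleC_one)
qed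

section \<open>Characters of \<open>\<ell>\<^sup>1(\<nat>, A)\<close>\<close>

definition semicharacter_of :: "('a::{complex_normed_algebra_1,banach,comm_ring_1} dirichlet_l1 \<Rightarrow> complex)
    \<Rightarrow> nat \<Rightarrow> complex" where
  "semicharacter_of \<Phi> n = \<Phi> (l1_single n 1)"

definition coeff_character :: "('a::{complex_normed_algebra_1,banach,comm_ring_1} dirichlet_l1 \<Rightarrow> complex)
    \<Rightarrow> 'a \<Rightarrow> complex" where
  "coeff_character \<Phi> x = \<Phi> (l1_single 1 x)"

lemma semicharacter_semicharacter_of:
  assumes "character \<Phi>"
  shows "semicharacter (semicharacter_of \<Phi>)"
  unfolding semicharacter_def
proof (intro conjI exI allI impI)
  interpret character \<Phi> by fact
  show "1 \<le> (1::nat)" "semicharacter_of \<Phi> 1 \<noteq> 0"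
    unfolding semicharacter_of_def l1_single_one hom_one by simp_all
  show "cmod (semicharacter_of \<Phi> n) \<le> 1" if "1 \<le> n" for n
    using character_norm_le[OF assms, of "l1_single n 1"] that
    by (simp add: semicharacter_of_def norm_l1_single)
  show "semicharacter_of \<Phi> (m * n) = semicharacter_of \<Phi> m * semicharacter_of \<Phi> n"
    if "1 \<le> m" "1 \<le> n" for m n
  proof -
    have "l1_single m 1 * l1_single n 1 = l1_single (m * n) 1"
      using l1_single_mult[OF that, of 1 1] by simp
    then show ?thesis
      unfolding semicharacter_of_def by (metis hom_mult)
  qed
qed

lemma character_coeff_character:
  assumes "character \<Phi>"
  shows "character (coeff_character \<Phi>)"
proof
  interpret character \<Phi> by fact
  fix x y :: 'a and c :: complex
  show "coeff_character \<Phi> (x + y) = coeff_character \<Phi> x + coeff_character \<Phi> y"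
    by (simp add: coeff_character_def l1_single_add hom_add)
  show "coeff_character \<Phi> (scaleC c x) = c * coeff_character \<Phi> x"
    by (simp add: coeff_character_def l1_single_scaleC hom_scaleC)
  have "l1_single 1 (x * y) = l1_single 1 x * l1_single 1 y"
    using l1_single_mult[of 1 1 x y] by simp
  then show "coeff_character \<Phi> (x * y) = coeff_character \<Phi> x * coeff_character \<Phi> y"
    by (simp add: coeff_character_def hom_mult)
  show "coeff_character \<Phi> 1 = 1"
    unfolding coeff_character_def l1_single_one by (rule hom_one)
qed

lemma character_Abs_dirichlet_l1:
  assumes "character \<Phi>" and "a \<in> l1"
  shows "\<Phi> (Abs_dirichlet_l1 a) = coeff_character \<Phi> (gtrans a (semicharacter_of \<Phi>))"
proof -
  interpret character \<Phi> by fact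
  interpret \<phi>: character "coeff_character \<Phi>"
    by (rule character_coeff_character[OF assms(1)])
  have terms: "\<Phi> (l1_single n (a n)) = coeff_character \<Phi> (scaleC (semicharacter_of \<Phi> n) (a n))"
    if "n \<in> {1..}" for n
  proof -
    have "l1_single 1 (a n) * l1_single n 1 = l1_single n (a n)"
      using that l1_single_mult[of 1 n "a n" 1] by simp
    then have "\<Phi> (l1_single n (a n)) = coeff_character \<Phi> (a n) * semicharacter_of \<Phi> n"
      unfolding coeff_character_def semicharacter_of_def by (metis hom_mult)
    then show ?thesis
      by (simp add: \<phi>.hom_scaleC mult.commute)
  qed
  have "((\<lambda>n. coeff_character \<Phi> (scaleC (semicharacter_of \<Phi> n) (a n))) has_sum
      coeff_character \<Phi> (gtrans a (semicharacter_of \<Phi>))) {1..}"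
    by (rule has_sum_bounded_linear[OF bounded_linear_character[OF character_coeff_character[OF assms(1)]]
          has_sum_gtrans[OF assms(2) semicharacter_semicharacter_of[OF assms(1)]]])
  then have "((\<lambda>n. \<Phi> (l1_single n (a n))) has_sum
      coeff_character \<Phi> (gtrans a (semicharacter_of \<Phi>))) {1..}"
    by (subst has_sum_cong[OF terms])
  with has_sum_bounded_linear[OF bounded_linear_character[OF assms(1)] has_sum_l1_single[OF assms(2)]]
  show ?thesis
    by (rule has_sum_unique)
qed

lemma l1_invertible_iff:
  assumes "a \<in> l1"
  shows "l1_invertible a \<longleftrightarrow> (\<exists>y. Abs_dirichlet_l1 a * y = 1)"
proof
  assume "l1_invertible a"
  then obtain b where "b \<in> l1" "dconv a b = dunit"
    unfolding l1_invertible_def by blast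
  then have "Abs_dirichlet_l1 a * Abs_dirichlet_l1 b = 1"
    using assms by (simp add: times_dirichlet_l1.abs_eq one_dirichlet_l1.abs_eq eq_onp_def dunit_in_l1)
  then show "\<exists>y. Abs_dirichlet_l1 a * y = 1" ..
next
  assume "\<exists>y. Abs_dirichlet_l1 a * y = 1"
  then obtain y where "Abs_dirichlet_l1 a * y = 1" ..
  then have "l1_coeffs (Abs_dirichlet_l1 a * y) = l1_coeffs 1"
    by simp
  then have "dconv a (l1_coeffs y) = dunit"
    using assms by (simp add: times_dirichlet_l1.rep_eq one_dirichlet_l1.rep_eq Abs_dirichlet_l1_inverse)
  then show "l1_invertible a"
    unfolding l1_invertible_def using l1_coeffs[of y] dconv_commute[of a] by auto
qed

theorem mainTheorem2:
  fixes a :: "nat \<Rightarrow> 'a::{complex_normed_algebra_1,banach,comm_ring_1}"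
  assumes "a \<in> l1"
  shows "l1_invertible a \<longleftrightarrow>
    (\<forall>chi. semicharacter chi \<longrightarrow> (\<exists>b. b * gtrans a chi = 1 \<and> gtrans a chi * b = 1))"
proof
  assume "l1_invertible a"
  then obtain b where "b \<in> l1" "dconv a b = dunit"
    unfolding l1_invertible_def by blast
  then have "gtrans a chi * gtrans b chi = 1" if "semicharacter chi" for chi
    using gtrans_dconv[OF assms \<open>b \<in> l1\<close> that, symmetric] gtrans_dunit[OF that] by simp
  then show "\<forall>chi. semicharacter chi \<longrightarrow> (\<exists>b. b * gtrans a chi = 1 \<and> gtrans a chi * b = 1)"
    by (metis mult.commute)
next
  assume invertible: "\<forall>chi. semicharacter chi \<longrightarrow> (\<exists>b. b * gtrans a chi = 1 \<and> gtrans a chi * b = 1)"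
  show "l1_invertible a"
  proof (rule ccontr)
    assume "\<not> l1_invertible a"
    then obtain \<Phi> where \<Phi>: "character \<Phi>" "\<Phi> (Abs_dirichlet_l1 a) = 0"
      using exists_character_vanishing l1_invertible_iff[OF assms] by blast
    obtain b where "gtrans a (semicharacter_of \<Phi>) * b = 1"
      using invertible semicharacter_semicharacter_of[OF \<Phi>(1)] by blast
    then have "coeff_character \<Phi> (gtrans a (semicharacter_of \<Phi>)) \<noteq> 0"
      by (rule character.hom_unit_nonzero[OF character_coeff_character[OF \<Phi>(1)]])
    with \<Phi> show False
      using character_Abs_dirichlet_l1[OF \<Phi>(1) assms] by simp
  qed
qed

end
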